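(* Let $K$ be a number field. Let $a_1,b_1\in\mathcal{O}_K$ with $b_1\notin\mathcal{O}_K^\times\cup\{0\}$ such that $a_1/b_1$ is a reduced fraction and $\mathfrak{g}_1:=\langle a_1,b_1\rangle$ is a non-principal inseverable ideal. Let $b_2\in\mathcal{O}_K\setminus\{0\}$ be such that $b_2$ is not an associate of $b_1$ (i.e. $b_2\mathcal{O}_K\neq b_1\mathcal{O}_K$). Then there exists $a_2\in\mathcal{O}_K$ such that $a_2/b_2=a_1/b_1$ and $a_2/b_2$ is a reduced fraction if and only if there is an inseverable ideal $\mathfrak{g}_2\neq\mathfrak{g}_1$ with \[\frac{\langle b_1\rangle}{\mathfrak{g}_1}=\frac{\langle b_2\rangle}{\mathfrak{g}_2}.\] In particular, in this case $[\mathfrak{g}_1]=[\mathfrak{g}_2]$ in the class group of $K$.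
   Context: $\langle x_1,\dots,x_n\rangle$ denotes the $\mathcal{O}_K$-ideal generated by $x_1,\dots,x_n$; $[\mathfrak{a}]$ denotes the ideal class of $\mathfrak{a}$. A fraction $a/b$ ($b\ne0$) is reduced if no non-unit of $\mathcal{O}_K$ divides both $a$ and $b$. A nonzero ideal of $\mathcal{O}_K$ is inseverable if the only principal ideal containing it is $\mathcal{O}_K$. *)

theory Defs
  imports "HOL-Computational_Algebra.Polynomial" Complex_Main
begin

text \<open>Number fields are modelled as subfields of the complex numbers that are
finite-dimensional over the rationals; the ring of integers is the set of
algebraic integers in K.\<close>

definition is_subfield :: "complex set \<Rightarrow> bool" where
  "is_subfield K \<longleftrightarrow> 0 \<in> K \<and> 1 \<in> K \<and>
     (\<forall>x\<in>K. \<forall>y\<in>K. x + y \<in> K \<and> x * y \<in> K) \<and>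
     (\<forall>x\<in>K. - x \<in> K \<and> inverse x \<in> K)"

definition number_field :: "complex set \<Rightarrow> bool" where
  "number_field K \<longleftrightarrow> is_subfield K \<and>
     (\<exists>B. finite B \<and> B \<subseteq> K \<and>
        K \<subseteq> {\<Sum>b\<in>B. c b * b | c. \<forall>b. c b \<in> \<rat>})"

definition OK :: "complex set \<Rightarrow> complex set" where
  "OK K = {x \<in> K. algebraic_int x}"

definition OK_unit :: "complex set \<Rightarrow> complex \<Rightarrow> bool" where
  "OK_unit K x \<longleftrightarrow> x \<in> OK K \<and> (\<exists>y\<in>OK K. x * y = 1)"

definition OK_dvd :: "complex set \<Rightarrow> complex \<Rightarrow> complex \<Rightarrow> bool" where
  "OK_dvd K d a \<longleftrightarrow> d \<in> OK K \<and> (\<exists>c\<in>OK K. a = d * c)"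

definition reduced_frac :: "complex set \<Rightarrow> complex \<Rightarrow> complex \<Rightarrow> bool" where
  "reduced_frac K a b \<longleftrightarrow> b \<noteq> 0 \<and>
     (\<forall>d\<in>OK K. OK_dvd K d a \<and> OK_dvd K d b \<longrightarrow> OK_unit K d)"

definition is_ideal :: "complex set \<Rightarrow> complex set \<Rightarrow> bool" where
  "is_ideal K I \<longleftrightarrow> I \<subseteq> OK K \<and> 0 \<in> I \<and>
     (\<forall>x\<in>I. \<forall>y\<in>I. x + y \<in> I) \<and> (\<forall>r\<in>OK K. \<forall>x\<in>I. r * x \<in> I)"

definition gen_ideal :: "complex set \<Rightarrow> complex set \<Rightarrow> complex set" where
  "gen_ideal K S = \<Inter> {I. is_ideal K I \<and> S \<subseteq> I}"

definition principal_ideal :: "complex set \<Rightarrow> complex set \<Rightarrow> bool" where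
  "principal_ideal K I \<longleftrightarrow> (\<exists>x\<in>OK K. I = gen_ideal K {x})"

definition inseverable :: "complex set \<Rightarrow> complex set \<Rightarrow> bool" where
  "inseverable K I \<longleftrightarrow> is_ideal K I \<and> I \<noteq> {0} \<and>
     (\<forall>J. is_ideal K J \<and> principal_ideal K J \<and> I \<subseteq> J \<longrightarrow> J = OK K)"

text \<open>The fractional ideal <b>/I = b * I^{-1}, with I^{-1} = {x in K. x I \<subseteq> O_K}.\<close>
definition frac_div :: "complex set \<Rightarrow> complex \<Rightarrow> complex set \<Rightarrow> complex set" where
  "frac_div K b I = (\<lambda>x. b * x) ` {x \<in> K. \<forall>y\<in>I. x * y \<in> OK K}"

definition same_class :: "complex set \<Rightarrow> complex set \<Rightarrow> complex set \<Rightarrow> bool" where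
  "same_class K I J \<longleftrightarrow> (\<exists>\<alpha>\<in>OK K. \<exists>\<beta>\<in>OK K. \<alpha> \<noteq> 0 \<and> \<beta> \<noteq> 0 \<and>
     (\<lambda>x. \<alpha> * x) ` I = (\<lambda>x. \<beta> * x) ` J)"

end

theory Submission
  imports Defs "Jordan_Normal_Form.Schur_Decomposition"
begin

(*
  Write <b>/g = b g^-1 with g^-1 = {x in K. x g \<subseteq> O_K}, and let c = b2/b1.
  If a2/b2 = a1/b1, then <a2,b2> = c g1, so b2 <a2,b2>^-1 = b1 g1^-1; and <a2,b2> \<noteq> g1,
  since c g1 = g1 would make c and 1/c algebraic integers (determinant trick) and <b2> = <b1>.
  Conversely, nonzero ideals of O_K are invertible, so g \<mapsto> g^-1 is injective and
  b1 g1^-1 = b2 g2^-1 forces g2 = c g1 = <c a1, b2>; thus c a1 \<in> O_K, b1 g2 = b2 g1, and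
  c a1 / b2 is reduced because g2 is inseverable.
  Invertibility is proved classically: the trace form makes O_K a full lattice, so O_K/<a> is
  finite for a \<noteq> 0; hence nonzero primes are maximal, every nonzero ideal contains a product
  of maximal ideals, and a shortest such product inside <a>, for a in a proper ideal L, yields
  z \<in> K - O_K with z L \<subseteq> O_K.
*)

section \<open>Algebraic integers\<close>

definition zspan :: "complex set \<Rightarrow> complex set" where
  "zspan S = {\<Sum>t\<in>S. of_int (c t) * t | c. True}"

lemma zspanI: "x = (\<Sum>t\<in>S. of_int (c t) * t) \<Longrightarrow> x \<in> zspan S"
  unfolding zspan_def by auto

lemma zspan_add:
  assumes "a \<in> zspan S" "b \<in> zspan S" shows "a + b \<in> zspan S"
proof -
  obtain c c' where "a = (\<Sum>t\<in>S. of_int (c t) * t)" "b = (\<Sum>t\<in>S. of_int (c' t) * t)"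
    using assms unfolding zspan_def by blast
  thus ?thesis by (intro zspanI[where c = "\<lambda>t. c t + c' t"]) (simp add: sum.distrib distrib_right)
qed

lemma zspan_of_int_mult:
  assumes "a \<in> zspan S" shows "of_int k * a \<in> zspan S"
proof -
  obtain c where "a = (\<Sum>t\<in>S. of_int (c t) * t)" using assms unfolding zspan_def by blast
  thus ?thesis by (intro zspanI[where c = "\<lambda>t. k * c t"]) (simp add: sum_distrib_left mult.assoc)
qed

lemma zspan_sum: "(\<And>i. i \<in> I \<Longrightarrow> f i \<in> zspan S) \<Longrightarrow> sum f I \<in> zspan S"
  by (induction I rule: infinite_finite_induct)
    (auto intro: zspan_add zspanI[where c = "\<lambda>_. 0"])

lemma zspan_superset: assumes "finite S" "s \<in> S" shows "s \<in> zspan S"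
proof (rule zspanI[where c = "\<lambda>t. if t = s then 1 else 0"])
  have "(\<Sum>t\<in>S. of_int (if t = s then 1 else 0) * t) = (\<Sum>t\<in>S. if t = s then s else 0)"
    by (rule sum.cong) auto
  thus "s = (\<Sum>t\<in>S. of_int (if t = s then 1 else 0) * t)" using assms by simp
qed

text \<open>The determinant trick: z is an eigenvalue of the integer matrix of multiplication by z
  on the generators.\<close>
lemma algebraic_int_if_zspan_stable:
  assumes fin: "finite S" and nz: "s0 \<in> S" "s0 \<noteq> 0"
    and stable: "\<And>s. s \<in> S \<Longrightarrow> z * s \<in> zspan S"
  shows "algebraic_int z"
proof -
  obtain ss where ss: "set ss = S" "distinct ss" using finite_distinct_list[OF fin] by blast
  define n where "n = length ss"
  have "\<forall>s\<in>S. \<exists>c. z * s = (\<Sum>t\<in>S. of_int (c t) * t)" using stable unfolding zspan_def by blast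
  then obtain C where C: "\<And>s. s \<in> S \<Longrightarrow> z * s = (\<Sum>t\<in>S. of_int (C s t) * t)" by metis
  define A :: "int mat" where "A = mat n n (\<lambda>(i,j). C (ss!i) (ss!j))"
  define v :: "complex vec" where "v = vec n (\<lambda>i. ss!i)"
  have A: "A \<in> carrier_mat n n" unfolding A_def by auto
  have sum_S: "(\<Sum>t\<in>S. f t) = (\<Sum>j<n. f (ss!j))" for f :: "complex \<Rightarrow> complex"
    using sum.reindex_bij_betw[OF bij_betw_nth[OF ss(2) _ ss(1)[symmetric]], of "{..<n}" f] by (simp add: n_def)
  have "of_int_hom.mat_hom A *\<^sub>v v = z \<cdot>\<^sub>v v"
  proof (rule eq_vecI)
    fix i assume "i < dim_vec (z \<cdot>\<^sub>v v)"
    hence i: "i < n" by (simp add: v_def)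
    have "(of_int_hom.mat_hom A *\<^sub>v v) $ i = (\<Sum>j<n. of_int (C (ss!i) (ss!j)) * ss!j)"
      using i by (simp add: A_def v_def mult_mat_vec_def scalar_prod_def atLeast0LessThan)
    also have "\<dots> = z * ss!i"
    proof -
      have "ss!i \<in> S" using i ss unfolding n_def by auto
      thus ?thesis using C sum_S by simp
    qed
    finally show "(of_int_hom.mat_hom A *\<^sub>v v) $ i = (z \<cdot>\<^sub>v v) $ i" using i by (simp add: v_def)
  qed (simp add: v_def A_def)
  moreover have "v \<noteq> 0\<^sub>v n"
  proof
    assume "v = 0\<^sub>v n"
    obtain j where "j < n" "ss!j = s0" using nz ss unfolding n_def by (metis in_set_conv_nth)
    with \<open>v = 0\<^sub>v n\<close> nz show False unfolding v_def by (metis index_vec index_zero_vec(1))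
  qed
  moreover have Ac: "of_int_hom.mat_hom A \<in> carrier_mat n n" using A by auto
  ultimately have "eigenvector (of_int_hom.mat_hom A) v z"
    unfolding eigenvector_def by (auto simp: v_def)
  hence "eigenvalue (of_int_hom.mat_hom A) z" unfolding eigenvalue_def by blast
  hence "poly (char_poly (of_int_hom.mat_hom A)) z = 0" using eigenvalue_root_char_poly[OF Ac] by blast
  hence "poly (map_poly of_int (char_poly A)) z = 0" using of_int_hom.char_poly_hom[OF A] by metis
  moreover have "lead_coeff (char_poly A) = 1" using degree_monic_char_poly[OF A] by simp
  ultimately show ?thesis unfolding algebraic_int_altdef_ipoly by blast
qed

lemma power_mult_in_zspan:
  fixes p :: "int poly"
  assumes root: "poly (map_poly of_int p) x = 0" and monic: "lead_coeff p = 1"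
    and low: "\<And>k. k < degree p \<Longrightarrow> x ^ k * c \<in> zspan S"
  shows "x ^ i * c \<in> zspan S"
proof (induction i rule: less_induct)
  case (less i)
  define m where "m = degree p"
  show ?case
  proof (cases "i < m")
    case True thus ?thesis using low m_def by blast
  next
    case False
    have "0 = (\<Sum>k\<le>m. of_int (coeff p k) * x ^ k)"
      using root by (simp add: poly_altdef degree_map_poly coeff_map_poly m_def)
    also have "\<dots> = (\<Sum>k<m. of_int (coeff p k) * x ^ k) + x ^ m"
      using monic by (simp add: lessThan_Suc_atMost[symmetric] m_def)
    finally have "x ^ m = (\<Sum>k<m. of_int (- coeff p k) * x ^ k)"
      by (simp add: sum_negf eq_neg_iff_add_eq_0 add.commute)
    moreover have "x ^ i = x ^ (i - m) * x ^ m" using False by (simp flip: power_add)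
    ultimately have "x ^ i * c = x ^ (i - m) * (\<Sum>k<m. of_int (- coeff p k) * x ^ k) * c"
      by simp
    also have "\<dots> = (\<Sum>k<m. of_int (- coeff p k) * (x ^ (i - m + k) * c))"
      by (simp add: sum_distrib_left sum_distrib_right power_add mult_ac)
    also have "\<dots> \<in> zspan S"
      using False by (intro zspan_sum zspan_of_int_mult less.IH) auto
    finally show ?thesis .
  qed
qed

lemma monic_root_degree_pos:
  fixes p :: "int poly"
  assumes "poly (map_poly of_int p) x = 0" "lead_coeff p = 1"
  shows "degree p > 0"
proof (rule ccontr)
  assume "\<not> degree p > 0"
  hence "p = [:1:]" using assms(2) by (metis coeff_pCons_0 degree_eq_zeroE gr0I)
  thus False using assms(1) by simp
qed

lemma monomials_in_zspan:
  fixes x y :: complex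
  assumes "algebraic_int x" "algebraic_int y"
  obtains S where "finite S" "1 \<in> S" "\<And>s. s \<in> S \<Longrightarrow> \<exists>i j. s = x ^ i * y ^ j"
    "\<And>i j. x ^ i * y ^ j \<in> zspan S"
proof -
  obtain p :: "int poly" where p: "poly (map_poly of_int p) x = 0" "lead_coeff p = 1"
    using assms(1) unfolding algebraic_int_altdef_ipoly by blast
  obtain q :: "int poly" where q: "poly (map_poly of_int q) y = 0" "lead_coeff q = 1"
    using assms(2) unfolding algebraic_int_altdef_ipoly by blast
  have "degree p > 0" "degree q > 0"
    using p q monic_root_degree_pos by blast+
  define S where "S = (\<lambda>(i,j). x ^ i * y ^ j) ` ({..<degree p} \<times> {..<degree q})"
  have S: "finite S" "1 \<in> S"
    unfolding S_def using \<open>degree p > 0\<close> \<open>degree q > 0\<close> by (auto intro!: image_eqI[of _ _ "(0,0)"])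
  have low: "x ^ i * y ^ j \<in> zspan S" if "i < degree p" "j < degree q" for i j
    using that S(1) by (intro zspan_superset) (auto simp: S_def)
  have "x ^ i * y ^ j \<in> zspan S" if "j < degree q" for i j
    using power_mult_in_zspan[OF p] low that by blast
  hence "x ^ i * y ^ j \<in> zspan S" for i j
    using power_mult_in_zspan[OF q, of "x ^ i"] by (simp add: mult.commute)
  moreover have "\<exists>i j. s = x ^ i * y ^ j" if "s \<in> S" for s
    using that by (auto simp: S_def)
  ultimately show ?thesis using that S by blast
qed

lemma algebraic_int_plus [intro]:
  fixes x y :: complex
  assumes "algebraic_int x" "algebraic_int y"
  shows "algebraic_int (x + y)"
proof -
  obtain S where S: "finite S" "1 \<in> S" "\<And>s. s \<in> S \<Longrightarrow> \<exists>i j. s = x ^ i * y ^ j"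
    "\<And>i j. x ^ i * y ^ j \<in> zspan S"
    using monomials_in_zspan[OF assms] by blast
  show ?thesis
  proof (rule algebraic_int_if_zspan_stable[OF S(1,2)])
    fix s assume "s \<in> S"
    then obtain i j where s: "s = x ^ i * y ^ j" using S(3) by blast
    have "(x + y) * s = x ^ Suc i * y ^ j + x ^ i * y ^ Suc j" unfolding s by (simp add: algebra_simps)
    also have "\<dots> \<in> zspan S" by (rule zspan_add[OF S(4) S(4)])
    finally show "(x + y) * s \<in> zspan S" .
  qed simp
qed

lemma algebraic_int_times [intro]:
  fixes x y :: complex
  assumes "algebraic_int x" "algebraic_int y"
  shows "algebraic_int (x * y)"
proof -
  obtain S where S: "finite S" "1 \<in> S" "\<And>s. s \<in> S \<Longrightarrow> \<exists>i j. s = x ^ i * y ^ j"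
    "\<And>i j. x ^ i * y ^ j \<in> zspan S"
    using monomials_in_zspan[OF assms] by blast
  show ?thesis
  proof (rule algebraic_int_if_zspan_stable[OF S(1,2)])
    fix s assume "s \<in> S"
    then obtain i j where s: "s = x ^ i * y ^ j" using S(3) by blast
    have "(x * y) * s = x ^ Suc i * y ^ Suc j" unfolding s by (simp add: algebra_simps)
    also have "\<dots> \<in> zspan S" by (rule S(4))
    finally show "(x * y) * s \<in> zspan S" .
  qed simp
qed

section \<open>A rational basis of K inside O_K\<close>

lemma Rats_common_denominator:
  assumes "finite I" "\<And>i. i \<in> I \<Longrightarrow> (q i :: complex) \<in> \<rat>"
  obtains n :: int where "n > 0" "\<And>i. i \<in> I \<Longrightarrow> of_int n * q i \<in> \<int>"
proof -
  have "\<exists>m::int. m > 0 \<and> of_int m * q i \<in> \<int>" if "i \<in> I" for i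
  proof -
    from assms(2)[OF that] obtain a b where "b > 0" "q i = of_int a / of_int b"
      by (rule Rats_cases')
    thus ?thesis by (intro exI[of _ b]) simp
  qed
  then obtain m where m: "\<And>i. i \<in> I \<Longrightarrow> m i > 0 \<and> of_int (m i) * q i \<in> \<int>" by metis
  show ?thesis
  proof (rule that[of "\<Prod>i\<in>I. m i"])
    show "(\<Prod>i\<in>I. m i) > 0" using m by (simp add: prod_pos)
    fix i assume i: "i \<in> I"
    have "of_int (\<Prod>i\<in>I. m i) * q i = of_int (\<Prod>j\<in>I - {i}. m j) * (of_int (m i) * q i)"
      using i assms(1) by (simp add: prod.remove mult_ac)
    also have "\<dots> \<in> \<int>" by (rule Ints_mult[OF Ints_of_int]) (use m[OF i] in blast)
    finally show "of_int (\<Prod>i\<in>I. m i) * q i \<in> \<int>" .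
  qed
qed

definition qspan :: "complex set \<Rightarrow> complex set" where
  "qspan S = {\<Sum>t\<in>S. c t * t | c. \<forall>t. c t \<in> \<rat>}"

lemma qspanI: "x = (\<Sum>t\<in>S. c t * t) \<Longrightarrow> (\<And>t. c t \<in> \<rat>) \<Longrightarrow> x \<in> qspan S"
  unfolding qspan_def by auto

lemma qspanE:
  "x \<in> qspan S \<Longrightarrow> (\<And>c. x = (\<Sum>t\<in>S. c t * t) \<Longrightarrow> (\<And>t. c t \<in> \<rat>) \<Longrightarrow> P) \<Longrightarrow> P"
  unfolding qspan_def by blast

lemma qspan_add: "a \<in> qspan S \<Longrightarrow> b \<in> qspan S \<Longrightarrow> a + b \<in> qspan S"
  by (elim qspanE, rule qspanI[where c = "\<lambda>t. _ t + _ t"]) (auto simp: sum.distrib distrib_right)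

lemma qspan_Rats_mult: "a \<in> qspan S \<Longrightarrow> k \<in> \<rat> \<Longrightarrow> k * a \<in> qspan S"
  by (elim qspanE, rule qspanI[where c = "\<lambda>t. k * _ t"]) (auto simp: sum_distrib_left mult.assoc)

lemma qspan_superset: assumes "finite S" "s \<in> S" shows "s \<in> qspan S"
proof (rule qspanI[where c = "\<lambda>t. if t = s then 1 else 0"])
  have "(\<Sum>t\<in>S. (if t = s then 1 else 0) * t) = (\<Sum>t\<in>S. if t = s then s else 0)"
    by (rule sum.cong) auto
  thus "s = (\<Sum>t\<in>S. (if t = s then 1 else 0) * t)" using assms by simp
qed auto

lemma qspan_sum: "(\<And>i. i \<in> I \<Longrightarrow> f i \<in> qspan S) \<Longrightarrow> sum f I \<in> qspan S"
  by (induction I rule: infinite_finite_induct)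
    (auto intro: qspan_add qspanI[where c = "\<lambda>_. 0"])

lemma qspan_subsetI:
  assumes "\<And>b. b \<in> B \<Longrightarrow> b \<in> qspan C"
  shows "qspan B \<subseteq> qspan C"
proof
  fix x assume "x \<in> qspan B"
  then obtain c where x: "x = (\<Sum>t\<in>B. c t * t)" "\<And>t. c t \<in> \<rat>" by (rule qspanE) auto
  show "x \<in> qspan C" unfolding x(1) using assms x(2) by (intro qspan_sum qspan_Rats_mult) auto
qed

text \<open>A list rather than a set, so that coordinates can index matrices.\<close>
definition OK_rational_basis :: "complex set \<Rightarrow> complex list \<Rightarrow> bool" where
  "OK_rational_basis K w \<longleftrightarrow> (\<forall>j<length w. w!j \<in> OK K) \<and>
     (\<forall>x\<in>K. \<exists>c. (\<forall>j. c j \<in> \<rat>) \<and> x = (\<Sum>j<length w. c j * w!j)) \<and>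
     (\<forall>c. (\<forall>j<length w. c j \<in> \<rat>) \<longrightarrow> (\<Sum>j<length w. c j * w!j) = 0 \<longrightarrow> (\<forall>j<length w. c j = 0))"

locale numfield =
  fixes K :: "complex set"
  assumes number_field: "number_field K"
begin

lemma K_0 [simp, intro]: "0 \<in> K" and K_1 [simp, intro]: "1 \<in> K"
  and K_add [intro]: "x \<in> K \<Longrightarrow> y \<in> K \<Longrightarrow> x + y \<in> K"
  and K_mult [intro]: "x \<in> K \<Longrightarrow> y \<in> K \<Longrightarrow> x * y \<in> K"
  and K_uminus [intro]: "x \<in> K \<Longrightarrow> - x \<in> K"
  and K_inverse [intro]: "x \<in> K \<Longrightarrow> inverse x \<in> K"
  using number_field unfolding number_field_def is_subfield_def by auto

lemma K_diff [intro]: "x \<in> K \<Longrightarrow> y \<in> K \<Longrightarrow> x - y \<in> K"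
  using K_add[of x "-y"] K_uminus by auto

lemma K_divide [intro]: "x \<in> K \<Longrightarrow> y \<in> K \<Longrightarrow> x / y \<in> K"
  using K_mult[of x "inverse y"] K_inverse by (auto simp: divide_inverse)

lemma K_of_int [intro]: "of_int n \<in> K"
proof -
  have "of_nat m \<in> K" for m by (induction m) auto
  thus ?thesis by (cases n rule: int_cases) auto
qed

lemma K_Rats [intro]: "q \<in> \<rat> \<Longrightarrow> q \<in> K"
  by (erule Rats_cases') auto

lemma K_sum [intro]: "(\<And>i. i \<in> I \<Longrightarrow> f i \<in> K) \<Longrightarrow> sum f I \<in> K"
  by (induction I rule: infinite_finite_induct) auto

lemma K_power [intro]: "x \<in> K \<Longrightarrow> x ^ n \<in> K"
  by (induction n) auto

lemma OKI: "x \<in> K \<Longrightarrow> algebraic_int x \<Longrightarrow> x \<in> OK K"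
  and OK_K [dest]: "y \<in> OK K \<Longrightarrow> y \<in> K"
  and OK_algebraic_int [dest]: "y \<in> OK K \<Longrightarrow> algebraic_int y"
  by (simp_all add: OK_def)

lemma OK_0 [simp, intro]: "0 \<in> OK K" and OK_1 [simp, intro]: "1 \<in> OK K"
  and OK_add [intro]: "x \<in> OK K \<Longrightarrow> y \<in> OK K \<Longrightarrow> x + y \<in> OK K"
  and OK_mult [intro]: "x \<in> OK K \<Longrightarrow> y \<in> OK K \<Longrightarrow> x * y \<in> OK K"
  and OK_uminus [intro]: "x \<in> OK K \<Longrightarrow> - x \<in> OK K"
  and OK_of_int [intro]: "of_int n \<in> OK K"
  by (auto simp: OK_def)

lemma OK_diff [intro]: "x \<in> OK K \<Longrightarrow> y \<in> OK K \<Longrightarrow> x - y \<in> OK K"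
  using OK_add[of x "-y"] OK_uminus by auto

lemma OK_power [intro]: "x \<in> OK K \<Longrightarrow> x ^ n \<in> OK K"
  by (induction n) auto

lemma int_multiple_in_OK:
  assumes x: "x \<in> K"
  obtains n :: int where "n > 0" "of_int n * x \<in> OK K"
proof -
  obtain B where B: "finite B" "B \<subseteq> K" "K \<subseteq> qspan B"
    using number_field unfolding number_field_def qspan_def by blast
  have "\<forall>b\<in>B. \<exists>c. x * b = (\<Sum>t\<in>B. c t * t) \<and> (\<forall>t. c t \<in> \<rat>)"
    using B x unfolding qspan_def by blast
  then obtain C where C: "\<And>b. b \<in> B \<Longrightarrow> x * b = (\<Sum>t\<in>B. C b t * t)" "\<And>b t. b \<in> B \<Longrightarrow> C b t \<in> \<rat>"
    by metis
  obtain n :: int where n: "n > 0" "\<And>bt. bt \<in> B \<times> B \<Longrightarrow> of_int n * (case bt of (b,t) \<Rightarrow> C b t) \<in> \<int>"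
    by (rule Rats_common_denominator[of "B \<times> B" "\<lambda>(b,t). C b t"]) (use B C in auto)
  obtain s0 where s0: "s0 \<in> B" "s0 \<noteq> 0"
  proof (rule ccontr)
    assume "\<not> thesis"
    hence "\<forall>t\<in>B. t = 0" using that by blast
    moreover obtain c where "1 = (\<Sum>t\<in>B. c t * t)" using B by (blast elim: qspanE)
    ultimately show False by simp
  qed
  have "algebraic_int (of_int n * x)"
  proof (rule algebraic_int_if_zspan_stable[OF B(1) s0])
    fix s assume s: "s \<in> B"
    have "\<forall>t\<in>B. \<exists>k. of_int n * C s t = of_int k"
      using n(2) s by (auto elim!: Ints_cases)
    then obtain k where k: "\<And>t. t \<in> B \<Longrightarrow> of_int n * C s t = of_int (k t)" by metis
    have "of_int n * x * s = (\<Sum>t\<in>B. (of_int n * C s t) * t)"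
      using C(1)[OF s] by (simp add: sum_distrib_left mult.assoc)
    also have "\<dots> = (\<Sum>t\<in>B. of_int (k t) * t)" using k by simp
    finally show "of_int n * x * s \<in> zspan B" by (rule zspanI)
  qed
  thus ?thesis using that n x by (auto intro!: OKI)
qed

lemma spanning_set_in_OK: obtains W where "finite W" "W \<subseteq> OK K" "K \<subseteq> qspan W"
proof -
  obtain B where B: "finite B" "B \<subseteq> K" "K \<subseteq> qspan B"
    using number_field unfolding number_field_def qspan_def by blast
  have "\<forall>b\<in>B. \<exists>n::int. n > 0 \<and> of_int n * b \<in> OK K" using B int_multiple_in_OK by blast
  then obtain N where N: "\<And>b. b \<in> B \<Longrightarrow> N b > (0::int) \<and> of_int (N b) * b \<in> OK K" by metis
  define W where "W = (\<lambda>b. of_int (N b) * b) ` B"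
  have "qspan B \<subseteq> qspan W"
  proof (rule qspan_subsetI)
    fix b assume b: "b \<in> B"
    have "of_int (N b) * b \<in> qspan W" unfolding W_def by (rule qspan_superset) (use B b in auto)
    hence "(1 / of_int (N b)) * (of_int (N b) * b) \<in> qspan W" by (rule qspan_Rats_mult) auto
    thus "b \<in> qspan W" using N[OF b] by simp
  qed
  thus ?thesis using that[of W] B N unfolding W_def by auto
qed

text \<open>A spanning set of minimal cardinality is independent.\<close>
lemma independent_spanning_set_in_OK:
  obtains W where "finite W" "W \<subseteq> OK K" "K \<subseteq> qspan W"
    "\<And>c. (\<And>t. c t \<in> \<rat>) \<Longrightarrow> (\<Sum>t\<in>W. c t * t) = 0 \<Longrightarrow> \<forall>t\<in>W. c t = 0"
proof -
  define P where "P W \<longleftrightarrow> finite W \<and> W \<subseteq> OK K \<and> K \<subseteq> qspan W" for W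
  obtain W0 where "P W0" using spanning_set_in_OK unfolding P_def by metis
  define W where "W = (ARG_MIN card W. P W)"
  have W: "P W" and minW: "\<And>V. P V \<Longrightarrow> card W \<le> card V"
    using arg_min_nat_lemma[of P W0 card] \<open>P W0\<close> unfolding W_def by auto
  have "\<forall>t\<in>W. c t = 0" if c: "\<And>t. c t \<in> \<rat>" "(\<Sum>t\<in>W. c t * t) = 0" for c
  proof (rule ccontr)
    assume "\<not> (\<forall>t\<in>W. c t = 0)"
    then obtain k where k: "k \<in> W" "c k \<noteq> 0" by blast
    define V where "V = W - {k}"
    have finW: "finite W" using W P_def by auto
    have ck: "c k * k = - (\<Sum>t\<in>V. c t * t)"
      using c(2) finW k unfolding V_def by (simp add: sum.remove eq_neg_iff_add_eq_0)
    have "k = (1 / c k) * (c k * k)" using k(2) by simp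
    also have "\<dots> = (\<Sum>t\<in>V. (- c t / c k) * t)" unfolding ck
      by (simp add: sum_distrib_left sum_negf)
    finally have "k = (\<Sum>t\<in>V. (- c t / c k) * t)" .
    hence kV: "k \<in> qspan V" by (rule qspanI) (use c in auto)
    have "qspan W \<subseteq> qspan V"
      using kV finW by (intro qspan_subsetI) (auto simp: V_def intro: qspan_superset)
    hence "P V" using W unfolding P_def V_def by auto
    moreover have "card V < card W" unfolding V_def using finW k by (meson card_Diff1_less)
    ultimately show False using minW by force
  qed
  thus ?thesis using that W unfolding P_def by blast
qed

lemma OK_rational_basis_exists: "\<exists>w. OK_rational_basis K w"
proof -
  obtain W where W: "finite W" "W \<subseteq> OK K" "K \<subseteq> qspan W"
    and indep: "\<And>c. (\<And>t. c t \<in> \<rat>) \<Longrightarrow> (\<Sum>t\<in>W. c t * t) = 0 \<Longrightarrow> \<forall>t\<in>W. c t = 0"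
    using independent_spanning_set_in_OK by blast
  obtain w where w: "set w = W" "distinct w" using finite_distinct_list[OF W(1)] by blast
  define d where "d = length w"
  have bij: "bij_betw (nth w) {..<d} W" using w by (intro bij_betw_nth) (auto simp: d_def)
  have reindex: "(\<Sum>t\<in>W. f t) = (\<Sum>j<d. f (w!j))" for f :: "complex \<Rightarrow> complex"
    using sum.reindex_bij_betw[OF bij, of f] by simp
  have "OK_rational_basis K w" unfolding OK_rational_basis_def d_def[symmetric]
  proof (intro conjI allI impI ballI)
    fix j assume "j < d" thus "w!j \<in> OK K" using W w unfolding d_def by auto
  next
    fix x assume "x \<in> K"
    then obtain c where c: "x = (\<Sum>t\<in>W. c t * t)" "\<And>t. c t \<in> \<rat>" using W(3) by (blast elim: qspanE)
    show "\<exists>c. (\<forall>j. c j \<in> \<rat>) \<and> x = (\<Sum>j<d. c j * w!j)"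
      by (rule exI[of _ "\<lambda>j. c (w!j)"]) (use c reindex in auto)
  next
    fix c j assume c: "\<forall>j<d. c j \<in> \<rat>" "(\<Sum>j<d. c j * w!j) = 0" and j: "j < d"
    define c' where "c' t = (if t \<in> W then c (the_inv_into {..<d} (nth w) t) else 0)" for t
    have inj: "inj_on (nth w) {..<d}" using bij bij_betw_def by blast
    have c'w: "c' (w!i) = c i" if "i < d" for i
      using that bij the_inv_into_f_f[OF inj] unfolding c'_def by (auto simp: bij_betw_def)
    have "\<forall>t. c' t \<in> \<rat>"
    proof
      fix t show "c' t \<in> \<rat>"
      proof (cases "t \<in> W")
        case True
        then obtain i where "i < d" "t = w!i" using bij by (auto simp: bij_betw_def)
        thus ?thesis using c'w c by auto
      qed (simp add: c'_def)
    qed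
    moreover have "(\<Sum>t\<in>W. c' t * t) = 0" using c(2) c'w by (simp add: reindex)
    ultimately have "\<forall>t\<in>W. c' t = 0" using indep by blast
    thus "c j = 0" using c'w[OF j] j w d_def by auto
  qed
  thus ?thesis by blast
qed

end

section \<open>Ideals of O_K\<close>

lemma image_mult_image_mult:
  fixes c d :: "'a::semigroup_mult"
  shows "(\<lambda>x. c * x) ` (\<lambda>x. d * x) ` A = (\<lambda>x. (c * d) * x) ` A"
  by (simp add: image_image mult.assoc)

context numfield
begin

lemma idealD:
  assumes "is_ideal K I"
  shows "I \<subseteq> OK K" "0 \<in> I" "\<And>x y. x \<in> I \<Longrightarrow> y \<in> I \<Longrightarrow> x + y \<in> I"
    "\<And>r x. r \<in> OK K \<Longrightarrow> x \<in> I \<Longrightarrow> r * x \<in> I"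
  using assms unfolding is_ideal_def by auto

lemma ideal_OK: "is_ideal K I \<Longrightarrow> x \<in> I \<Longrightarrow> x \<in> OK K"
  using idealD(1) by blast

lemma ideal_mult_right: "is_ideal K I \<Longrightarrow> x \<in> I \<Longrightarrow> r \<in> OK K \<Longrightarrow> x * r \<in> I"
  using idealD(4)[of I r x] by (simp add: mult.commute)

lemma ideal_diff: "is_ideal K I \<Longrightarrow> x \<in> I \<Longrightarrow> y \<in> I \<Longrightarrow> x - y \<in> I"
  using idealD(3)[of I x "-y"] idealD(4)[of I "-1" y] by auto

lemma ideal_sum: "is_ideal K I \<Longrightarrow> (\<And>i. i \<in> A \<Longrightarrow> f i \<in> I) \<Longrightarrow> sum f A \<in> I"
  by (induction A rule: infinite_finite_induct) (auto intro: idealD)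

lemma ideal_eq_OK_iff: "is_ideal K I \<Longrightarrow> I = OK K \<longleftrightarrow> 1 \<in> I"
  using idealD(1)[of I] idealD(4)[of I _ 1] by auto

lemma gen_ideal_least: "is_ideal K L \<Longrightarrow> S \<subseteq> L \<Longrightarrow> gen_ideal K S \<subseteq> L"
  unfolding gen_ideal_def by blast

lemma gen_ideal_superset: "S \<subseteq> gen_ideal K S"
  unfolding gen_ideal_def by blast

lemma gen_ideal_ideal: assumes "S \<subseteq> OK K" shows "is_ideal K (gen_ideal K S)"
  using assms unfolding gen_ideal_def is_ideal_def by (auto 0 3)

definition ideal_plus :: "complex set \<Rightarrow> complex \<Rightarrow> complex set" where
  "ideal_plus L x = {p + r * x | p r. p \<in> L \<and> r \<in> OK K}"

definition pideal :: "complex \<Rightarrow> complex set" where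
  "pideal x = {r * x | r. r \<in> OK K}"

definition ideal2 :: "complex \<Rightarrow> complex \<Rightarrow> complex set" where
  "ideal2 a b = {r * a + s * b | r s. r \<in> OK K \<and> s \<in> OK K}"

lemma ideal_plus_ideal:
  assumes L: "is_ideal K L" and x: "x \<in> OK K"
  shows "is_ideal K (ideal_plus L x)"
  unfolding is_ideal_def
proof (intro conjI ballI subsetI)
  show "y \<in> OK K" if "y \<in> ideal_plus L x" for y
    using that ideal_OK[OF L] x unfolding ideal_plus_def by auto
  show "0 \<in> ideal_plus L x"
    using idealD(2)[OF L] unfolding ideal_plus_def by force
  show "y + z \<in> ideal_plus L x" if yz: "y \<in> ideal_plus L x" "z \<in> ideal_plus L x" for y z
  proof -
    obtain p r p' r' where "y = p + r * x" "z = p' + r' * x" "p \<in> L" "r \<in> OK K" "p' \<in> L" "r' \<in> OK K"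
      using yz unfolding ideal_plus_def by blast
    moreover have "p + r * x + (p' + r' * x) = (p + p') + (r + r') * x" by (simp add: algebra_simps)
    ultimately show ?thesis using idealD(3)[OF L] unfolding ideal_plus_def by blast
  qed
  show "t * y \<in> ideal_plus L x" if ty: "t \<in> OK K" "y \<in> ideal_plus L x" for t y
  proof -
    obtain p r where "y = p + r * x" "p \<in> L" "r \<in> OK K"
      using ty unfolding ideal_plus_def by blast
    moreover have "t * (p + r * x) = t * p + (t * r) * x" by (simp add: algebra_simps)
    ultimately show ?thesis using ty idealD(4)[OF L] unfolding ideal_plus_def by blast
  qed
qed

lemma ideal_plus_superset: "L \<subseteq> ideal_plus L x"
  unfolding ideal_plus_def by force

lemma ideal_plus_mem: "is_ideal K L \<Longrightarrow> x \<in> ideal_plus L x"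
  unfolding ideal_plus_def by (intro CollectI exI[of _ 0] exI[of _ 1]) (auto intro: idealD(2))

lemma zero_ideal: "is_ideal K {0}"
  unfolding is_ideal_def by auto

lemma pideal_eq_ideal_plus: "pideal x = ideal_plus {0} x"
  unfolding pideal_def ideal_plus_def by auto

lemma ideal2_eq_ideal_plus: "ideal2 a b = ideal_plus (pideal a) b"
  unfolding ideal2_def ideal_plus_def pideal_def by auto

lemma pideal_ideal: "x \<in> OK K \<Longrightarrow> is_ideal K (pideal x)"
  unfolding pideal_eq_ideal_plus by (rule ideal_plus_ideal[OF zero_ideal])

lemma ideal2_ideal: "a \<in> OK K \<Longrightarrow> b \<in> OK K \<Longrightarrow> is_ideal K (ideal2 a b)"
  unfolding ideal2_eq_ideal_plus by (rule ideal_plus_ideal[OF pideal_ideal])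

lemma pideal_mem: "x \<in> pideal x"
  unfolding pideal_def by (intro CollectI exI[of _ 1]) auto

lemma pideal_memI: "r \<in> OK K \<Longrightarrow> r * x \<in> pideal x"
  unfolding pideal_def by auto

lemma pideal_least: "is_ideal K I \<Longrightarrow> x \<in> I \<Longrightarrow> pideal x \<subseteq> I"
  unfolding pideal_def using idealD(4) by blast

lemma ideal2_mem: "a \<in> ideal2 a b" "b \<in> ideal2 a b"
  unfolding ideal2_def by (intro CollectI exI[of _ 1] exI[of _ 0], auto)+

lemma ideal2_least: "is_ideal K I \<Longrightarrow> a \<in> I \<Longrightarrow> b \<in> I \<Longrightarrow> ideal2 a b \<subseteq> I"
  unfolding ideal2_def using idealD(3,4) by blast

lemma ideal2_scale: "(\<lambda>x. c * x) ` ideal2 a b = ideal2 (c * a) (c * b)"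
proof safe
  fix x assume "x \<in> ideal2 a b"
  then obtain r s where "x = r * a + s * b" "r \<in> OK K" "s \<in> OK K" unfolding ideal2_def by blast
  moreover have "c * (r * a + s * b) = r * (c * a) + s * (c * b)" by (simp add: algebra_simps)
  ultimately show "c * x \<in> ideal2 (c * a) (c * b)" unfolding ideal2_def by blast
next
  fix x assume "x \<in> ideal2 (c * a) (c * b)"
  then obtain r s where "x = r * (c * a) + s * (c * b)" "r \<in> OK K" "s \<in> OK K"
    unfolding ideal2_def by blast
  moreover have "r * (c * a) + s * (c * b) = c * (r * a + s * b)" by (simp add: algebra_simps)
  ultimately show "x \<in> (\<lambda>x. c * x) ` ideal2 a b" unfolding ideal2_def by blast
qed

lemma gen_ideal_singleton:
  assumes "x \<in> OK K" shows "gen_ideal K {x} = pideal x"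
proof
  show "gen_ideal K {x} \<subseteq> pideal x"
    using pideal_mem by (intro gen_ideal_least[OF pideal_ideal[OF assms]]) auto
  show "pideal x \<subseteq> gen_ideal K {x}"
    using assms gen_ideal_superset by (intro pideal_least gen_ideal_ideal) auto
qed

lemma gen_ideal_pair:
  assumes "a \<in> OK K" "b \<in> OK K" shows "gen_ideal K {a, b} = ideal2 a b"
proof
  show "gen_ideal K {a, b} \<subseteq> ideal2 a b"
    using ideal2_mem by (intro gen_ideal_least[OF ideal2_ideal[OF assms]]) auto
  show "ideal2 a b \<subseteq> gen_ideal K {a, b}"
    using assms gen_ideal_superset[of "{a, b}"] by (intro ideal2_least gen_ideal_ideal) auto
qed

definition colon_ideal :: "complex set \<Rightarrow> complex \<Rightarrow> complex set" where
  "colon_ideal L x = {t \<in> OK K. x * t \<in> L}"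

lemma colon_ideal_ideal:
  assumes L: "is_ideal K L" shows "is_ideal K (colon_ideal L x)"
  unfolding is_ideal_def colon_ideal_def
proof (intro conjI ballI subsetI)
  show "0 \<in> {t \<in> OK K. x * t \<in> L}" using idealD(2)[OF L] by simp
  show "y + z \<in> {t \<in> OK K. x * t \<in> L}" if "y \<in> {t \<in> OK K. x * t \<in> L}" "z \<in> {t \<in> OK K. x * t \<in> L}" for y z
    using that idealD(3)[OF L, of "x * y" "x * z"] by (auto simp: distrib_left)
  show "r * y \<in> {t \<in> OK K. x * t \<in> L}" if "r \<in> OK K" "y \<in> {t \<in> OK K. x * t \<in> L}" for r y
    using that idealD(4)[OF L, of r "x * y"] by (auto simp: mult_ac)
qed auto

definition maximal_ideal :: "complex set \<Rightarrow> bool" where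
  "maximal_ideal P \<longleftrightarrow> is_ideal K P \<and> 1 \<notin> P \<and> (\<forall>J. is_ideal K J \<and> P \<subseteq> J \<longrightarrow> J = P \<or> 1 \<in> J)"

definition prime_ideal :: "complex set \<Rightarrow> bool" where
  "prime_ideal P \<longleftrightarrow> is_ideal K P \<and> 1 \<notin> P \<and>
     (\<forall>x\<in>OK K. \<forall>y\<in>OK K. x * y \<in> P \<longrightarrow> x \<in> P \<or> y \<in> P)"

lemma ideal_plus_mult:
  assumes L: "is_ideal K L" and x: "x \<in> OK K" and y: "y \<in> OK K"
    and u: "u \<in> ideal_plus L x" and v: "v \<in> ideal_plus L y" and xy: "x * y \<in> L"
  shows "u * v \<in> L"
proof -
  obtain p r p' r' where pr: "u = p + r * x" "p \<in> L" "r \<in> OK K" "v = p' + r' * y" "p' \<in> L" "r' \<in> OK K"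
    using u v unfolding ideal_plus_def by blast
  have "u * v = ((p * p' + p * (r' * y)) + (r * x) * p') + (r * r') * (x * y)"
    using pr by (simp add: algebra_simps)
  also have "\<dots> \<in> L"
  proof -
    have "p * p' \<in> L" "p * (r' * y) \<in> L"
      using pr y ideal_OK[OF L] by (auto intro!: ideal_mult_right[OF L pr(2)])
    moreover have "(r * x) * p' \<in> L" "(r * r') * (x * y) \<in> L"
      using pr x xy by (auto intro!: idealD(4)[OF L])
    ultimately show ?thesis by (intro idealD(3)[OF L])
  qed
  finally show ?thesis .
qed

lemma maximal_ideal_prime: assumes "maximal_ideal P" shows "prime_ideal P"
  unfolding prime_ideal_def
proof (intro conjI ballI impI)
  show P: "is_ideal K P" "1 \<notin> P" using assms unfolding maximal_ideal_def by auto
  fix x y assume x: "x \<in> OK K" and y: "y \<in> OK K" and xy: "x * y \<in> P"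
  show "x \<in> P \<or> y \<in> P"
  proof (rule ccontr)
    assume "\<not> (x \<in> P \<or> y \<in> P)"
    hence "1 \<in> ideal_plus P x" "1 \<in> ideal_plus P y"
      using assms ideal_plus_ideal[OF P(1)] ideal_plus_superset ideal_plus_mem[OF P(1)] x y
      unfolding maximal_ideal_def by metis+
    hence "1 * 1 \<in> P" by (rule ideal_plus_mult[OF P(1) x y _ _ xy])
    thus False using P(2) by simp
  qed
qed

text \<open>The ideal product of the list Ps is contained in L; stated elementwise so that no ideal
  products have to be formed.\<close>
definition products_in :: "complex set list \<Rightarrow> complex set \<Rightarrow> bool" where
  "products_in Ps L \<longleftrightarrow> (\<forall>xs. list_all2 (\<in>) xs Ps \<longrightarrow> prod_list xs \<in> L)"

lemma prod_list_OK:
  "list_all2 (\<in>) xs Ps \<Longrightarrow> (\<And>P. P \<in> set Ps \<Longrightarrow> P \<subseteq> OK K) \<Longrightarrow> prod_list xs \<in> OK K"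
  by (induction xs Ps rule: list_all2_induct) auto

lemma products_in_Nil: "1 \<in> L \<Longrightarrow> products_in [] L"
  unfolding products_in_def by simp

lemma products_in_single: "products_in [P] P"
  unfolding products_in_def by (auto simp: list_all2_Cons2)

lemma products_in_append:
  assumes "products_in Ps1 L1" "products_in Ps2 L2" "\<And>u v. u \<in> L1 \<Longrightarrow> v \<in> L2 \<Longrightarrow> u * v \<in> L"
  shows "products_in (Ps1 @ Ps2) L"
  unfolding products_in_def
proof (intro allI impI)
  fix xs assume "list_all2 (\<in>) xs (Ps1 @ Ps2)"
  then obtain xs1 xs2 where "xs = xs1 @ xs2" "list_all2 (\<in>) xs1 Ps1" "list_all2 (\<in>) xs2 Ps2"
    by (auto simp: list_all2_append2)
  thus "prod_list xs \<in> L" using assms unfolding products_in_def by simp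
qed

lemma products_in_mono: "products_in Ps L \<Longrightarrow> L \<subseteq> L' \<Longrightarrow> products_in Ps L'"
  unfolding products_in_def by blast

lemma prime_ideal_products_in:
  assumes M: "prime_ideal M" and Ps: "\<And>P. P \<in> set Ps \<Longrightarrow> P \<subseteq> OK K" and "products_in Ps M"
  shows "\<exists>P\<in>set Ps. P \<subseteq> M"
  using Ps \<open>products_in Ps M\<close>
proof (induction Ps)
  case Nil thus ?case using M unfolding prime_ideal_def products_in_def by auto
next
  case (Cons P Ps)
  show ?case
  proof (cases "P \<subseteq> M")
    case False
    then obtain p where p: "p \<in> P" "p \<notin> M" by blast
    have "prod_list xs \<in> M" if xs: "list_all2 (\<in>) xs Ps" for xs
    proof -
      have "p * prod_list xs \<in> M"
        using Cons.prems(2) p(1) xs unfolding products_in_def by (metis list_all2_Cons prod_list.Cons)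
      moreover have "p \<in> OK K" "prod_list xs \<in> OK K"
        using Cons.prems(1) p(1) prod_list_OK[OF xs] by auto
      ultimately show ?thesis using M p(2) unfolding prime_ideal_def by blast
    qed
    hence "\<exists>P\<in>set Ps. P \<subseteq> M" using Cons unfolding products_in_def by auto
    thus ?thesis by simp
  qed simp
qed

definition ideal_inv :: "complex set \<Rightarrow> complex set" where
  "ideal_inv I = {z \<in> K. \<forall>y\<in>I. z * y \<in> OK K}"

lemma frac_div_ideal_inv: "frac_div K b I = (\<lambda>x. b * x) ` ideal_inv I"
  unfolding frac_div_def ideal_inv_def ..

lemma one_ideal_inv: "is_ideal K I \<Longrightarrow> 1 \<in> ideal_inv I"
  unfolding ideal_inv_def using ideal_OK by simp

lemma ideal_inv_add: "u \<in> ideal_inv I \<Longrightarrow> v \<in> ideal_inv I \<Longrightarrow> u + v \<in> ideal_inv I"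
  unfolding ideal_inv_def by (auto simp: distrib_right)

lemma ideal_inv_OK_mult: "r \<in> OK K \<Longrightarrow> v \<in> ideal_inv I \<Longrightarrow> r * v \<in> ideal_inv I"
  unfolding ideal_inv_def by (auto simp: mult.assoc)

lemma scaled_ideal_inv_ideal:
  assumes "is_ideal K I" "a \<in> I"
  shows "is_ideal K ((\<lambda>v. a * v) ` ideal_inv I)"
  unfolding is_ideal_def
proof (intro conjI ballI subsetI)
  show "x \<in> OK K" if "x \<in> (\<lambda>v. a * v) ` ideal_inv I" for x
    using that assms(2) unfolding ideal_inv_def by (auto simp: mult.commute)
  show "0 \<in> (\<lambda>v. a * v) ` ideal_inv I"
    by (rule image_eqI[of _ _ 0]) (auto simp: ideal_inv_def)
  show "x + y \<in> (\<lambda>v. a * v) ` ideal_inv I"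
    if "x \<in> (\<lambda>v. a * v) ` ideal_inv I" "y \<in> (\<lambda>v. a * v) ` ideal_inv I" for x y
    using that ideal_inv_add by (auto simp flip: distrib_left)
  show "r * x \<in> (\<lambda>v. a * v) ` ideal_inv I" if "r \<in> OK K" "x \<in> (\<lambda>v. a * v) ` ideal_inv I" for r x
    using that ideal_inv_OK_mult by (auto simp: mult.left_commute)
qed

lemma ideal_inv_scale:
  assumes c: "c \<in> K" "c \<noteq> 0"
  shows "ideal_inv ((\<lambda>x. c * x) ` I) = (\<lambda>x. inverse c * x) ` ideal_inv I"
proof safe
  fix z assume z: "z \<in> ideal_inv ((\<lambda>x. c * x) ` I)"
  hence "z * c \<in> ideal_inv I" using c unfolding ideal_inv_def by (auto simp: mult.assoc)
  moreover have "z = inverse c * (z * c)" using c(2) by simp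
  ultimately show "z \<in> (\<lambda>x. inverse c * x) ` ideal_inv I" by blast
next
  fix v assume "v \<in> ideal_inv I"
  thus "inverse c * v \<in> ideal_inv ((\<lambda>x. c * x) ` I)"
    using c unfolding ideal_inv_def by (auto simp: mult_ac)
qed

definition ideal_mult_inv :: "complex set \<Rightarrow> complex set" where
  "ideal_mult_inv I = gen_ideal K {u * v | u v. u \<in> I \<and> v \<in> ideal_inv I}"

lemma ideal_mult_inv_ideal: "is_ideal K (ideal_mult_inv I)"
  unfolding ideal_mult_inv_def
proof (rule gen_ideal_ideal, safe)
  fix u v assume "u \<in> I" "v \<in> ideal_inv I"
  hence "v * u \<in> OK K" unfolding ideal_inv_def by blast
  thus "u * v \<in> OK K" by (simp only: mult.commute)
qed

lemma mult_mem_ideal_mult_inv: "u \<in> I \<Longrightarrow> v \<in> ideal_inv I \<Longrightarrow> u * v \<in> ideal_mult_inv I"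
proof -
  assume "u \<in> I" "v \<in> ideal_inv I"
  hence "u * v \<in> {u * v | u v. u \<in> I \<and> v \<in> ideal_inv I}" by blast
  thus ?thesis unfolding ideal_mult_inv_def using gen_ideal_superset by (rule subsetD[rotated])
qed

lemma OK_dvd_iff_pideal: "OK_dvd K d a \<longleftrightarrow> d \<in> OK K \<and> a \<in> pideal d"
  unfolding OK_dvd_def pideal_def by (simp add: mult.commute conj_commute Bex_def)

lemma OK_unit_iff_pideal:
  assumes "d \<in> OK K" shows "OK_unit K d \<longleftrightarrow> pideal d = OK K"
proof -
  have "pideal d = OK K \<longleftrightarrow> 1 \<in> pideal d" by (rule ideal_eq_OK_iff[OF pideal_ideal[OF assms]])
  also have "\<dots> \<longleftrightarrow> (\<exists>y\<in>OK K. d * y = 1)"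
    unfolding pideal_def by (simp add: mult.commute conj_commute Bex_def eq_commute[of 1])
  finally show ?thesis unfolding OK_unit_def using assms by simp
qed

lemma principal_ideal_iff_pideal: "principal_ideal K J \<longleftrightarrow> (\<exists>x\<in>OK K. J = pideal x)"
  unfolding principal_ideal_def using gen_ideal_singleton by blast

lemma reduced_frac_iff_inseverable:
  assumes a: "a \<in> OK K" and b: "b \<in> OK K" "b \<noteq> 0"
  shows "reduced_frac K a b \<longleftrightarrow> inseverable K (ideal2 a b)"
proof -
  have dvd: "OK_dvd K d a \<and> OK_dvd K d b \<longleftrightarrow> ideal2 a b \<subseteq> pideal d" if "d \<in> OK K" for d
    using that ideal2_mem[where a = a and b = b] ideal2_least[OF pideal_ideal[OF that], of a b]
    by (auto simp: OK_dvd_iff_pideal)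
  have "reduced_frac K a b \<longleftrightarrow> (\<forall>d\<in>OK K. ideal2 a b \<subseteq> pideal d \<longrightarrow> pideal d = OK K)"
    unfolding reduced_frac_def using b(2) dvd OK_unit_iff_pideal by auto
  moreover have "is_ideal K (ideal2 a b)" "ideal2 a b \<noteq> {0}"
    using ideal2_ideal[OF a b(1)] ideal2_mem(2)[where a = a and b = b] b(2) by auto
  hence "inseverable K (ideal2 a b) \<longleftrightarrow> (\<forall>d\<in>OK K. ideal2 a b \<subseteq> pideal d \<longrightarrow> pideal d = OK K)"
    unfolding inseverable_def principal_ideal_iff_pideal using pideal_ideal by blast
  ultimately show ?thesis by simp
qed

end

section \<open>The trace form and the lattice O_K\<close>

definition mat_trace :: "'a::comm_ring_1 mat \<Rightarrow> 'a" where
  "mat_trace A = (\<Sum>i<dim_row A. A $$ (i,i))"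

lemma mat_trace_mult_comm:
  assumes A: "A \<in> carrier_mat n m" and B: "B \<in> carrier_mat m n"
  shows "mat_trace (A * B) = mat_trace (B * A)"
proof -
  have "mat_trace (A * B) = (\<Sum>i<n. \<Sum>k<m. A $$ (i,k) * B $$ (k,i))"
    unfolding mat_trace_def
    by (intro sum.cong refl) (use A B in \<open>auto simp: scalar_prod_def atLeast0LessThan\<close>)
  also have "\<dots> = (\<Sum>k<m. \<Sum>i<n. A $$ (i,k) * B $$ (k,i))"
    by (rule sum.swap)
  also have "\<dots> = mat_trace (B * A)"
    unfolding mat_trace_def
    by (intro sum.cong refl) (use A B in \<open>auto simp: scalar_prod_def atLeast0LessThan mult.commute\<close>)
  finally show ?thesis .
qed

lemma mat_trace_similar:
  assumes "similar_mat_wit A B P Q"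
  shows "mat_trace A = mat_trace B"
proof -
  define n where "n = dim_row A"
  have c: "A \<in> carrier_mat n n" "B \<in> carrier_mat n n" "P \<in> carrier_mat n n" "Q \<in> carrier_mat n n"
    and QP: "Q * P = 1\<^sub>m n" and A: "A = P * B * Q"
    using assms[unfolded similar_mat_wit_def Let_def, folded n_def] by blast+
  have "mat_trace A = mat_trace (P * (B * Q))" unfolding A by (subst assoc_mult_mat[OF c(3) c(2) c(4)]) (rule refl)
  also have "\<dots> = mat_trace ((B * Q) * P)" by (rule mat_trace_mult_comm[OF c(3) mult_carrier_mat[OF c(2) c(4)]])
  also have "(B * Q) * P = B * (Q * P)" by (rule assoc_mult_mat[OF c(2) c(4) c(3)])
  also have "\<dots> = B" unfolding QP by (rule right_mult_one_mat[OF c(2)])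
  finally show ?thesis .
qed

lemma div_mod_decomp_sgn:
  fixes e D n :: int
  shows "e = e mod (\<bar>D\<bar> * n) + ((e div (\<bar>D\<bar> * n)) * sgn D) * n * D"
proof -
  have "((e div (\<bar>D\<bar> * n)) * sgn D) * n * D = (\<bar>D\<bar> * n) * (e div (\<bar>D\<bar> * n))"
    by (simp add: abs_sgn mult_ac)
  thus ?thesis using mult_div_mod_eq[of "\<bar>D\<bar> * n" e] by linarith
qed

lemma Ints_of_int_floor_Re: "(z::complex) \<in> \<int> \<Longrightarrow> of_int \<lfloor>Re z\<rfloor> = z"
  by (erule Ints_cases) simp

lemma det_Ints:
  fixes A :: "complex mat"
  assumes A: "A \<in> carrier_mat n n" and ent: "\<And>i j. i < n \<Longrightarrow> j < n \<Longrightarrow> A $$ (i,j) \<in> \<int>"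
  shows "det A \<in> \<int>"
proof -
  define Ai where "Ai = map_mat (\<lambda>z. \<lfloor>Re z\<rfloor>) A"
  have "of_int_hom.mat_hom Ai = A"
    using A ent by (intro eq_matI) (auto simp: Ai_def Ints_of_int_floor_Re)
  hence "det A = of_int (det Ai)" using of_int_hom.hom_det[of Ai] by metis
  thus ?thesis by simp
qed

lemma singular_Ints_matrix_rational_kernel:
  fixes A :: "complex mat"
  assumes A: "A \<in> carrier_mat n n" and ent: "\<And>i j. i < n \<Longrightarrow> j < n \<Longrightarrow> A $$ (i,j) \<in> \<int>"
    and "det A = 0"
  obtains v :: "rat vec" where "v \<in> carrier_vec n" "v \<noteq> 0\<^sub>v n"
    "\<And>i. i < n \<Longrightarrow> (\<Sum>j<n. A $$ (i,j) * of_rat (v$j)) = 0"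
proof -
  define Ai where "Ai = map_mat (\<lambda>z. \<lfloor>Re z\<rfloor>) A"
  have A_Ai: "A = of_int_hom.mat_hom Ai"
    using A ent by (intro eq_matI) (auto simp: Ai_def Ints_of_int_floor_Re)
  define Ar :: "rat mat" where "Ar = of_int_hom.mat_hom Ai"
  have Ar: "Ar \<in> carrier_mat n n" using A by (simp add: Ar_def Ai_def)
  have "of_int (det Ai) = (0::complex)"
    using \<open>det A = 0\<close> of_int_hom.hom_det[of Ai] A_Ai by metis
  hence "det Ar = 0" unfolding Ar_def of_int_hom.hom_det by simp
  then obtain v where v: "v \<in> carrier_vec n" "v \<noteq> 0\<^sub>v n" "Ar *\<^sub>v v = 0\<^sub>v n"
    using det_0_iff_vec_prod_zero_field[OF Ar] by blast
  have "(\<Sum>j<n. A $$ (i,j) * of_rat (v$j)) = of_rat ((Ar *\<^sub>v v) $ i)" if i: "i < n" for i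
  proof -
    have "A $$ (i,j) = of_rat (Ar $$ (i,j))" if "j < n" for j
      using i that A ent by (simp add: Ar_def Ai_def Ints_of_int_floor_Re)
    thus ?thesis using i v(1) Ar by (simp add: of_rat_sum of_rat_mult scalar_prod_def atLeast0LessThan)
  qed
  thus ?thesis using that v by simp
qed

locale numfield_basis = numfield +
  fixes w :: "complex list"
  assumes basis: "OK_rational_basis K w"
begin

abbreviation "d \<equiv> length w"

lemma basis_OK: "j < d \<Longrightarrow> w!j \<in> OK K"
  using basis unfolding OK_rational_basis_def by auto

lemma basis_K: "j < d \<Longrightarrow> w!j \<in> K"
  using basis_OK by auto

lemma basis_independent:
  "(\<And>j. j < d \<Longrightarrow> c j \<in> \<rat>) \<Longrightarrow> (\<Sum>j<d. c j * w!j) = 0 \<Longrightarrow> j < d \<Longrightarrow> c j = 0"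
  using basis unfolding OK_rational_basis_def by blast

lemma basis_combination_K: "(\<And>j. j < d \<Longrightarrow> c j \<in> \<rat>) \<Longrightarrow> (\<Sum>j<d. c j * w!j) \<in> K"
  by (intro K_sum K_mult[OF K_Rats basis_K]) auto

definition coord :: "complex \<Rightarrow> nat \<Rightarrow> complex" where
  "coord x = (SOME c. (\<forall>j. c j \<in> \<rat>) \<and> x = (\<Sum>j<d. c j * w!j))"

lemma coord_Rats: "x \<in> K \<Longrightarrow> coord x j \<in> \<rat>"
  and coord_expansion: "x \<in> K \<Longrightarrow> x = (\<Sum>j<d. coord x j * w!j)"
proof -
  assume "x \<in> K"
  hence "\<exists>c. (\<forall>j. c j \<in> \<rat>) \<and> x = (\<Sum>j<d. c j * w!j)"
    using basis unfolding OK_rational_basis_def by blast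
  hence "(\<forall>j. coord x j \<in> \<rat>) \<and> x = (\<Sum>j<d. coord x j * w!j)"
    unfolding coord_def by (rule someI_ex)
  thus "coord x j \<in> \<rat>" "x = (\<Sum>j<d. coord x j * w!j)" by auto
qed

lemma coord_unique:
  assumes "\<And>j. j < d \<Longrightarrow> c j \<in> \<rat>" "x = (\<Sum>j<d. c j * w!j)" "j < d"
  shows "coord x j = c j"
proof -
  have x: "x \<in> K" using assms basis_combination_K by simp
  have "(\<Sum>j<d. (coord x j - c j) * w!j) = (\<Sum>j<d. coord x j * w!j) - (\<Sum>j<d. c j * w!j)"
    by (simp add: sum_subtractf left_diff_distrib)
  also have "\<dots> = 0" using coord_expansion[OF x] assms(2) by simp
  finally have "coord x j - c j = 0" using assms coord_Rats[OF x]
    by (intro basis_independent[where c = "\<lambda>j. coord x j - c j"]) auto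
  thus ?thesis by simp
qed

lemma coord_sum:
  assumes "finite I" "\<And>k. k \<in> I \<Longrightarrow> y k \<in> K" "\<And>k. k \<in> I \<Longrightarrow> q k \<in> \<rat>" "j < d"
  shows "coord (\<Sum>k\<in>I. q k * y k) j = (\<Sum>k\<in>I. q k * coord (y k) j)"
proof (rule coord_unique)
  have "(\<Sum>k\<in>I. q k * y k) = (\<Sum>k\<in>I. q k * (\<Sum>j<d. coord (y k) j * w!j))"
    using coord_expansion assms by (intro sum.cong) auto
  also have "\<dots> = (\<Sum>j<d. (\<Sum>k\<in>I. q k * coord (y k) j) * w!j)"
    by (simp add: sum_distrib_left sum_distrib_right mult.assoc sum.swap[of _ I])
  finally show "(\<Sum>k\<in>I. q k * y k) = (\<Sum>j<d. (\<Sum>k\<in>I. q k * coord (y k) j) * w!j)" .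
  show "\<And>j. j < d \<Longrightarrow> (\<Sum>k\<in>I. q k * coord (y k) j) \<in> \<rat>"
    using assms coord_Rats by (intro Rats_sum Rats_mult) auto
qed (use assms in auto)

lemma coord_basis: "i < d \<Longrightarrow> j < d \<Longrightarrow> coord (w!i) j = (if i = j then 1 else 0)"
proof (rule coord_unique)
  assume i: "i < d"
  have "(\<Sum>j<d. (if i = j then 1 else 0) * w!j) = (\<Sum>j<d. if i = j then w!j else 0)"
    by (rule sum.cong) auto
  also have "\<dots> = w!i" using i by simp
  finally show "w!i = (\<Sum>j<d. (if i = j then 1 else 0) * w!j)" by simp
qed auto

lemma coord_0: "j < d \<Longrightarrow> coord 0 j = 0"
  by (rule coord_unique[where c = "\<lambda>_. 0"]) auto

text \<open>Row i holds the coordinates of y * w!i, the transpose of the usual convention.\<close>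
definition mult_matrix :: "complex \<Rightarrow> complex mat" where
  "mult_matrix y = mat d d (\<lambda>(i,j). coord (y * w!i) j)"

definition trace :: "complex \<Rightarrow> complex" where
  "trace y = mat_trace (mult_matrix y)"

lemma mult_matrix_carrier: "mult_matrix y \<in> carrier_mat d d"
  unfolding mult_matrix_def by simp

lemma mult_matrix_mult_vec:
  "v \<in> carrier_vec d \<Longrightarrow> i < d \<Longrightarrow> (mult_matrix y *\<^sub>v v) $ i = (\<Sum>j<d. coord (y * w!i) j * v$j)"
  by (simp add: mult_matrix_def scalar_prod_def atLeast0LessThan)

lemma trace_eq_sum_coord: "trace y = (\<Sum>i<d. coord (y * w!i) i)"
  unfolding trace_def mat_trace_def mult_matrix_def by simp

lemma mult_matrix_sum_mult_vec:
  assumes "finite I" "\<And>k. k \<in> I \<Longrightarrow> y k \<in> K" "\<And>k. k \<in> I \<Longrightarrow> q k \<in> \<rat>"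
    and v: "v \<in> carrier_vec d" and i: "i < d"
  shows "(mult_matrix (\<Sum>k\<in>I. q k * y k) *\<^sub>v v) $ i = (\<Sum>k\<in>I. q k * (mult_matrix (y k) *\<^sub>v v) $ i)"
proof -
  have "(mult_matrix (\<Sum>k\<in>I. q k * y k) *\<^sub>v v) $ i
      = (\<Sum>j<d. coord (\<Sum>k\<in>I. q k * (y k * w!i)) j * v$j)"
    using v i by (simp add: mult_matrix_mult_vec sum_distrib_right mult.assoc)
  also have "\<dots> = (\<Sum>j<d. (\<Sum>k\<in>I. q k * coord (y k * w!i) j) * v$j)"
    using assms basis_K by (intro sum.cong refl arg_cong2[where f = "(*)"] coord_sum) auto
  also have "\<dots> = (\<Sum>k\<in>I. q k * (\<Sum>j<d. coord (y k * w!i) j * v$j))"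
    by (simp add: sum_distrib_left sum_distrib_right mult.assoc sum.swap[of _ I])
  also have "\<dots> = (\<Sum>k\<in>I. q k * (mult_matrix (y k) *\<^sub>v v) $ i)"
    using v i by (simp add: mult_matrix_mult_vec)
  finally show ?thesis .
qed

lemma mult_matrix_power_eigenvector:
  assumes x: "x \<in> K" and v: "v \<in> carrier_vec d" and ev: "mult_matrix x *\<^sub>v v = e \<cdot>\<^sub>v v"
  shows "i < d \<Longrightarrow> (mult_matrix (x ^ k) *\<^sub>v v) $ i = e ^ k * v$i"
proof (induction k arbitrary: i)
  case 0
  have "(mult_matrix (x ^ 0) *\<^sub>v v) $ i = (\<Sum>j<d. if i = j then v$j else 0)"
    unfolding mult_matrix_mult_vec[OF v 0] using 0 by (intro sum.cong) (auto simp: coord_basis)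
  thus ?case using 0 by simp
next
  case (Suc k)
  define c where "c l = coord (x * w!i) l" for l
  have xw: "x * w!i = (\<Sum>l<d. c l * w!l)"
    unfolding c_def using x basis_K Suc.prems by (intro coord_expansion) auto
  have "x ^ Suc k * w!i = x ^ k * (x * w!i)" by simp
  also have "\<dots> = (\<Sum>l<d. c l * (x ^ k * w!l))"
    unfolding xw by (simp add: sum_distrib_left mult_ac)
  finally have xkw: "x ^ Suc k * w!i = (\<Sum>l<d. c l * (x ^ k * w!l))" .
  have "coord (x ^ Suc k * w!i) j = (\<Sum>l<d. c l * coord (x ^ k * w!l) j)" if "j < d" for j
    unfolding xkw using that K_mult[OF K_power[OF x] basis_K] K_mult[OF x basis_K] Suc.prems
    by (intro coord_sum) (auto simp: c_def intro: coord_Rats)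
  hence "(mult_matrix (x ^ Suc k) *\<^sub>v v) $ i = (\<Sum>j<d. (\<Sum>l<d. c l * coord (x ^ k * w!l) j) * v$j)"
    using v Suc.prems by (simp add: mult_matrix_mult_vec)
  also have "\<dots> = (\<Sum>j<d. \<Sum>l<d. c l * (coord (x ^ k * w!l) j * v$j))"
    by (simp add: sum_distrib_right mult.assoc)
  also have "\<dots> = (\<Sum>l<d. \<Sum>j<d. c l * (coord (x ^ k * w!l) j * v$j))"
    by (rule sum.swap)
  also have "\<dots> = (\<Sum>l<d. c l * (mult_matrix (x ^ k) *\<^sub>v v) $ l)"
    using v by (simp add: mult_matrix_mult_vec sum_distrib_left)
  also have "\<dots> = e ^ k * (mult_matrix x *\<^sub>v v) $ i"
    using v Suc.prems Suc.IH by (simp add: mult_matrix_mult_vec c_def sum_distrib_left mult_ac)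
  also have "\<dots> = e ^ Suc k * v$i"
    using ev v Suc.prems by simp
  finally show ?case .
qed

lemma mult_matrix_eigenvalue_algebraic_int:
  assumes x: "x \<in> OK K" and ev: "eigenvector (mult_matrix x) v e"
  shows "algebraic_int e"
proof -
  have v: "v \<in> carrier_vec d" "v \<noteq> 0\<^sub>v d" "mult_matrix x *\<^sub>v v = e \<cdot>\<^sub>v v"
    using ev unfolding eigenvector_def by (auto simp: mult_matrix_def)
  obtain p :: "int poly" where p: "poly (map_poly of_int p) x = 0" "lead_coeff p = 1"
    using x unfolding OK_def algebraic_int_altdef_ipoly by blast
  have p_sum: "poly (map_poly of_int p) y = (\<Sum>k\<le>degree p. of_int (coeff p k) * y ^ k)" for y :: complex
    by (simp add: poly_altdef degree_map_poly coeff_map_poly)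
  obtain i where i: "i < d" "v$i \<noteq> 0"
    using v(1,2) by (metis eq_vecI carrier_vecD index_zero_vec(1,2))
  have "0 = (mult_matrix 0 *\<^sub>v v) $ i"
    using v(1) i by (simp add: mult_matrix_mult_vec coord_0)
  also have "\<dots> = (mult_matrix (\<Sum>k\<le>degree p. of_int (coeff p k) * x ^ k) *\<^sub>v v) $ i"
    using p(1) p_sum by simp
  also have "\<dots> = (\<Sum>k\<le>degree p. of_int (coeff p k) * (mult_matrix (x ^ k) *\<^sub>v v) $ i)"
    using x v(1) i by (intro mult_matrix_sum_mult_vec) auto
  also have "\<dots> = (\<Sum>k\<le>degree p. of_int (coeff p k) * e ^ k) * v$i"
    using mult_matrix_power_eigenvector[OF OK_K[OF x] v(1,3) i(1)]
    by (simp add: sum_distrib_left sum_distrib_right mult_ac)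
  also have "\<dots> = poly (map_poly of_int p) e * v$i" by (simp add: p_sum)
  finally have "poly (map_poly of_int p) e = 0" using i(2) by simp
  thus ?thesis using p(2) unfolding algebraic_int_altdef_ipoly by blast
qed

lemma algebraic_int_sum_list: "(\<And>x. x \<in> set xs \<Longrightarrow> algebraic_int (x::complex)) \<Longrightarrow> algebraic_int (sum_list xs)"
  by (induction xs) auto

text \<open>The trace is the sum of the eigenvalues, read off a Schur decomposition.\<close>
lemma trace_OK_Ints:
  assumes x: "x \<in> OK K" shows "trace x \<in> \<int>"
proof -
  define A where "A = mult_matrix x"
  have A: "A \<in> carrier_mat d d" unfolding A_def by (rule mult_matrix_carrier)
  obtain es where es: "char_poly A = (\<Prod>a\<leftarrow>es. [:- a, 1:])" using char_poly_factorized[OF A] by blast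
  obtain B P Q where "schur_decomposition A es = (B, P, Q)" by (metis prod_cases3)
  from schur_decomposition[OF A es this] have sim: "similar_mat_wit A B P Q" and dg: "diag_mat B = es"
    by auto
  have "trace x = mat_trace B" unfolding trace_def A_def[symmetric] by (rule mat_trace_similar[OF sim])
  also have "\<dots> = sum_list es" unfolding dg[symmetric] mat_trace_def diag_mat_def
    by (simp add: sum_list_sum_nth atLeast0LessThan)
  finally have tr: "trace x = sum_list es" .
  have "algebraic_int e" if e: "e \<in> set es" for e
  proof -
    have "poly (char_poly A) e = 0" unfolding es using e
      by (simp add: poly_prod_list)
    hence "eigenvalue A e" using eigenvalue_root_char_poly[OF A, of e] by blast
    then obtain v where "eigenvector A v e" unfolding eigenvalue_def by blast
    thus ?thesis using mult_matrix_eigenvalue_algebraic_int[OF x] unfolding A_def by blast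
  qed
  hence "algebraic_int (trace x)" using tr algebraic_int_sum_list by metis
  moreover have "trace x \<in> \<rat>"
    using x unfolding trace_eq_sum_coord by (intro Rats_sum coord_Rats K_mult basis_K) auto
  ultimately show ?thesis using rational_algebraic_int_is_int by blast
qed

lemma trace_sum:
  assumes "finite I" "\<And>k. k \<in> I \<Longrightarrow> y k \<in> K" "\<And>k. k \<in> I \<Longrightarrow> q k \<in> \<rat>"
  shows "trace (\<Sum>k\<in>I. q k * y k) = (\<Sum>k\<in>I. q k * trace (y k))"
proof -
  have "trace (\<Sum>k\<in>I. q k * y k) = (\<Sum>i<d. coord (\<Sum>k\<in>I. q k * (y k * w!i)) i)"
    unfolding trace_eq_sum_coord by (simp add: sum_distrib_right mult.assoc)
  also have "\<dots> = (\<Sum>i<d. \<Sum>k\<in>I. q k * coord (y k * w!i) i)"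
    using assms basis_K by (intro sum.cong refl coord_sum) auto
  also have "\<dots> = (\<Sum>k\<in>I. \<Sum>i<d. q k * coord (y k * w!i) i)" by (rule sum.swap)
  also have "\<dots> = (\<Sum>k\<in>I. q k * trace (y k))" unfolding trace_eq_sum_coord by (simp add: sum_distrib_left)
  finally show ?thesis .
qed

lemma trace_mult_expansion:
  assumes "x \<in> K" "i < d"
  shows "trace (w!i * x) = (\<Sum>j<d. coord x j * trace (w!i * w!j))"
proof -
  have "w!i * x = (\<Sum>j<d. coord x j * (w!i * w!j))"
    using assms by (subst coord_expansion[of x]) (auto simp: sum_distrib_left mult_ac)
  thus ?thesis using assms basis_K coord_Rats by (simp only:) (rule trace_sum, auto)
qed

lemma trace_1: "trace 1 = of_nat d"
  unfolding trace_eq_sum_coord using coord_basis by simp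

lemma degree_pos: "d > 0"
proof (rule ccontr)
  assume "\<not> d > 0"
  moreover have "(1::complex) = (\<Sum>j<d. coord 1 j * w!j)" by (rule coord_expansion) simp
  ultimately show False by simp
qed

lemma trace_form_nondegenerate:
  assumes y: "y \<in> K" and orth: "\<And>i. i < d \<Longrightarrow> trace (w!i * y) = 0"
  shows "y = 0"
proof (rule ccontr)
  assume "y \<noteq> 0"
  define z where "z = inverse y"
  have z: "z \<in> K" using y unfolding z_def by auto
  have "z * y = (\<Sum>i<d. coord z i * (w!i * y))"
    by (subst coord_expansion[OF z]) (simp add: sum_distrib_right mult.assoc)
  hence "trace (z * y) = (\<Sum>i<d. coord z i * trace (w!i * y))"
    using z y basis_K coord_Rats by (simp only:) (rule trace_sum, auto)
  also have "\<dots> = 0" using orth by simp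
  finally have "trace 1 = 0" using \<open>y \<noteq> 0\<close> unfolding z_def by simp
  thus False using trace_1 degree_pos by simp
qed

definition gram_matrix :: "complex mat" where
  "gram_matrix = mat d d (\<lambda>(i,j). trace (w!i * w!j))"

lemma gram_matrix_carrier: "gram_matrix \<in> carrier_mat d d"
  unfolding gram_matrix_def by simp

lemma gram_matrix_Ints: "i < d \<Longrightarrow> j < d \<Longrightarrow> gram_matrix $$ (i,j) \<in> \<int>"
  unfolding gram_matrix_def using basis_OK by (auto intro!: trace_OK_Ints)

text \<open>A rational kernel vector of the Gram matrix would give an element of K orthogonal to
  the whole basis under the trace form.\<close>
lemma det_gram_matrix_nonzero: "det gram_matrix \<noteq> 0"
proof
  assume "det gram_matrix = 0"
  then obtain v where v: "v \<in> carrier_vec d" "v \<noteq> 0\<^sub>v d"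
    and ker: "\<And>i. i < d \<Longrightarrow> (\<Sum>j<d. gram_matrix $$ (i,j) * of_rat (v$j)) = 0"
    using singular_Ints_matrix_rational_kernel[OF gram_matrix_carrier gram_matrix_Ints] by blast
  define y where "y = (\<Sum>j<d. of_rat (v$j) * w!j)"
  have y: "y \<in> K" unfolding y_def by (rule basis_combination_K) simp
  have coord_y: "coord y j = of_rat (v$j)" if "j < d" for j
    using that unfolding y_def by (intro coord_unique) auto
  have "trace (w!i * y) = (\<Sum>j<d. gram_matrix $$ (i,j) * of_rat (v$j))" if i: "i < d" for i
    unfolding trace_mult_expansion[OF y i] using i
    by (intro sum.cong) (auto simp: coord_y gram_matrix_def mult.commute)
  hence "trace (w!i * y) = 0" if "i < d" for i using ker that by simp
  hence "y = 0" using trace_form_nondegenerate y by blast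
  hence "v$j = 0" if "j < d" for j using coord_y[OF that] coord_0[OF that] by simp
  hence "v = 0\<^sub>v d" using v(1) by (intro eq_vecI) auto
  thus False using v(2) by simp
qed

text \<open>Cramer's rule applied to the Gram matrix: the coordinates of an algebraic integer solve
  a linear system whose matrix and right-hand side (traces) are integral.\<close>
lemma OK_coord_denominator:
  obtains D :: int where "D \<noteq> 0" "\<And>x j. x \<in> OK K \<Longrightarrow> j < d \<Longrightarrow> of_int D * coord x j \<in> \<int>"
proof -
  define D where "D = \<lfloor>Re (det gram_matrix)\<rfloor>"
  have D: "of_int D = det gram_matrix"
    unfolding D_def using det_Ints[OF gram_matrix_carrier gram_matrix_Ints]
    by (rule Ints_of_int_floor_Re)
  have "of_int D * coord x j \<in> \<int>" if x: "x \<in> OK K" and j: "j < d" for x j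
  proof -
    define cv where "cv = vec d (coord x)"
    have cv: "cv \<in> carrier_vec d" unfolding cv_def by simp
    have G_cv: "(gram_matrix *\<^sub>v cv) $ i = trace (w!i * x)" if i: "i < d" for i
      unfolding trace_mult_expansion[OF OK_K[OF x] i] using i gram_matrix_carrier
      by (simp add: gram_matrix_def cv_def scalar_prod_def atLeast0LessThan mult.commute)
    have "det (replace_col gram_matrix (gram_matrix *\<^sub>v cv) j) = cv $ j * det gram_matrix"
      by (rule cramer_lemma_mat[OF gram_matrix_carrier cv j])
    moreover have "det (replace_col gram_matrix (gram_matrix *\<^sub>v cv) j) \<in> \<int>"
    proof (rule det_Ints)
      show "replace_col gram_matrix (gram_matrix *\<^sub>v cv) j \<in> carrier_mat d d"
        using gram_matrix_carrier by (simp add: replace_col_def)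
      fix a b assume a: "a < d" and b: "b < d"
      show "replace_col gram_matrix (gram_matrix *\<^sub>v cv) j $$ (a, b) \<in> \<int>"
        using a b gram_matrix_carrier G_cv[OF a] trace_OK_Ints[OF OK_mult[OF basis_OK[OF a] x]]
          gram_matrix_Ints
        by (cases "b = j") (simp_all add: replace_col_def)
    qed
    ultimately show ?thesis using j D by (simp add: cv_def mult.commute)
  qed
  moreover have "D \<noteq> 0" using D det_gram_matrix_nonzero by auto
  ultimately show ?thesis using that by blast
qed

lemma OK_decomposition_mod_int:
  assumes D: "D \<noteq> 0" "\<And>x j. x \<in> OK K \<Longrightarrow> j < d \<Longrightarrow> of_int D * coord x j \<in> \<int>"
    and n: "n > (0::int)" and x: "x \<in> OK K"
  obtains r q where "\<And>j. r j \<in> {0..<\<bar>D\<bar> * n}"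
    "x = (\<Sum>j<d. (of_int (r j) / of_int D) * w!j) + (\<Sum>j<d. of_int (q j) * (of_int n * w!j))"
proof -
  define m where "m = \<bar>D\<bar> * n"
  define e where "e j = \<lfloor>Re (of_int D * coord x j)\<rfloor>" for j
  have e: "of_int (e j) = of_int D * coord x j" if "j < d" for j
    unfolding e_def using Ints_of_int_floor_Re[OF D(2)[OF x that]] .
  define r where "r j = e j mod m" for j
  define q where "q j = (e j div m) * sgn D" for j
  have eq: "e j = r j + q j * n * D" for j
    unfolding r_def q_def m_def by (rule div_mod_decomp_sgn)
  have "coord x j * w!j = (of_int (r j) / of_int D) * w!j + of_int (q j) * (of_int n * w!j)"
    if j: "j < d" for j
  proof -
    have "coord x j = of_int (e j) / of_int D" unfolding e[OF j] using D(1) by simp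
    also have "\<dots> = of_int (r j) / of_int D + of_int (q j) * of_int n"
      unfolding eq using D(1) by (simp add: add_divide_distrib)
    finally show ?thesis by (simp add: distrib_right mult.assoc)
  qed
  hence "x = (\<Sum>j<d. (of_int (r j) / of_int D) * w!j) + (\<Sum>j<d. of_int (q j) * (of_int n * w!j))"
    using coord_expansion[OF OK_K[OF x]] by (simp add: sum.distrib)
  moreover have "r j \<in> {0..<m}" for j using D(1) n unfolding r_def m_def by simp
  ultimately show ?thesis using that m_def by blast
qed

text \<open>Since O_K lies in the lattice spanned by the w!j / D, it has finitely many residues modulo
  the sublattice spanned by the n * w!j.\<close>
lemma OK_residues_mod_int:
  assumes n: "n > (0::int)"
  obtains F where "finite F"
    "\<And>x. x \<in> OK K \<Longrightarrow> \<exists>y\<in>F. \<exists>q. x = y + (\<Sum>j<d. of_int (q j) * (of_int n * w!j))"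
proof -
  obtain D :: int where D: "D \<noteq> 0" "\<And>x j. x \<in> OK K \<Longrightarrow> j < d \<Longrightarrow> of_int D * coord x j \<in> \<int>"
    by (rule OK_coord_denominator) blast
  define g where "g r = (\<Sum>j<d. (of_int (r j) / of_int D) * w!j)" for r :: "nat \<Rightarrow> int"
  define F where "F = g ` PiE {..<d} (\<lambda>_. {0..<\<bar>D\<bar> * n})"
  have "\<exists>y\<in>F. \<exists>q. x = y + (\<Sum>j<d. of_int (q j) * (of_int n * w!j))" if x: "x \<in> OK K" for x
  proof -
    obtain r q where r: "\<And>j. r j \<in> {0..<\<bar>D\<bar> * n}"
      and x_eq: "x = g r + (\<Sum>j<d. of_int (q j) * (of_int n * w!j))"
      using OK_decomposition_mod_int[OF D n x] unfolding g_def by blast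
    have "g r = g (restrict r {..<d})" unfolding g_def by simp
    moreover have "restrict r {..<d} \<in> PiE {..<d} (\<lambda>_. {0..<\<bar>D\<bar> * n})" using r by auto
    ultimately have "g r \<in> F" unfolding F_def by blast
    thus ?thesis using x_eq by blast
  qed
  moreover have "finite F" unfolding F_def by (intro finite_imageI finite_PiE) auto
  ultimately show ?thesis using that by blast
qed

end

section \<open>Invertibility of nonzero ideals\<close>

context numfield_basis
begin

lemma int_in_pideal:
  assumes a: "a \<in> OK K" "a \<noteq> 0"
  obtains n :: int where "n > 0" "of_int n \<in> pideal a"
proof -
  obtain n :: int where n: "n > 0" "of_int n * inverse a \<in> OK K"
    using int_multiple_in_OK[of "inverse a"] a by auto
  have "of_int n * inverse a * a \<in> pideal a" by (rule pideal_memI[OF n(2)])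
  thus ?thesis using that n(1) a(2) by (simp add: mult.assoc)
qed

lemma OK_residues_mod_pideal:
  assumes a: "a \<in> OK K" "a \<noteq> 0"
  obtains F where "finite F" "\<And>x. x \<in> OK K \<Longrightarrow> \<exists>y\<in>F. x - y \<in> pideal a"
proof -
  obtain n :: int where n: "n > 0" "of_int n \<in> pideal a" by (rule int_in_pideal[OF a])
  obtain F where F: "finite F"
    and rep: "\<And>x. x \<in> OK K \<Longrightarrow> \<exists>y\<in>F. \<exists>q. x = y + (\<Sum>j<d. of_int (q j) * (of_int n * w!j))"
    by (rule OK_residues_mod_int[OF n(1)]) blast
  have "\<exists>y\<in>F. x - y \<in> pideal a" if x: "x \<in> OK K" for x
  proof -
    obtain y q where y: "y \<in> F" "x = y + (\<Sum>j<d. of_int (q j) * (of_int n * w!j))"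
      using rep[OF x] by blast
    have "x - y = (\<Sum>j<d. (of_int (q j) * w!j) * of_int n)" using y by (simp add: mult_ac)
    also have "\<dots> \<in> pideal a"
      using basis_OK by (intro ideal_sum[OF pideal_ideal[OF a(1)]] idealD(4)[OF pideal_ideal[OF a(1)] _ n(2)]) auto
    finally show ?thesis using y by blast
  qed
  thus ?thesis using that F by blast
qed

text \<open>The determinant trick again: a nonzero ideal M is a finitely generated \<int>-module,
  generated by finitely many residues together with the n * w!j for an integer n \<in> M.\<close>
lemma algebraic_int_if_ideal_stable:
  assumes M: "is_ideal K M" "M \<noteq> {0}" and stable: "\<And>x. x \<in> M \<Longrightarrow> z * x \<in> M"
  shows "algebraic_int z"
proof -
  obtain a where a: "a \<in> M" "a \<noteq> 0" using M idealD(2)[OF M(1)] by blast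
  have a_OK: "a \<in> OK K" using ideal_OK[OF M(1) a(1)] .
  obtain n :: int where n: "n > 0" "of_int n \<in> pideal a" by (rule int_in_pideal[OF a_OK a(2)])
  obtain F where F: "finite F"
    and rep: "\<And>x. x \<in> OK K \<Longrightarrow> \<exists>y\<in>F. \<exists>q. x = y + (\<Sum>j<d. of_int (q j) * (of_int n * w!j))"
    by (rule OK_residues_mod_int[OF n(1)]) blast
  have nw: "of_int n * w!j \<in> M" if "j < d" for j
    using pideal_least[OF M(1) a(1)] n(2) basis_OK[OF that]
    by (auto intro: ideal_mult_right[OF M(1)])
  define S where "S = (F \<inter> M) \<union> (\<lambda>j. of_int n * w!j) ` {..<d} \<union> {a}"
  have S: "finite S" "a \<in> S" unfolding S_def using F by auto
  show ?thesis
  proof (rule algebraic_int_if_zspan_stable[OF S a(2)])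
    fix s assume "s \<in> S"
    hence "z * s \<in> M" using stable nw a(1) unfolding S_def by auto
    then obtain y q where y: "y \<in> F" and zs: "z * s = y + (\<Sum>j<d. of_int (q j) * (of_int n * w!j))"
      using rep ideal_OK[OF M(1)] by blast
    have "(\<Sum>j<d. of_int (q j) * (of_int n * w!j)) \<in> M"
      by (rule ideal_sum[OF M(1)]) (use nw idealD(4)[OF M(1) OK_of_int] in auto)
    hence "z * s - (\<Sum>j<d. of_int (q j) * (of_int n * w!j)) \<in> M"
      by (rule ideal_diff[OF M(1) \<open>z * s \<in> M\<close>])
    hence "y \<in> M" using zs by simp
    hence "y \<in> S" using y unfolding S_def by auto
    have "(\<Sum>j<d. of_int (q j) * (of_int n * w!j)) \<in> zspan S"
      using S(1) by (intro zspan_sum zspan_of_int_mult zspan_superset) (auto simp: S_def)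
    thus "z * s \<in> zspan S" unfolding zs using zspan_add zspan_superset[OF S(1) \<open>y \<in> S\<close>] by blast
  qed
qed

lemma finite_ideals_containing:
  assumes I: "is_ideal K I" "I \<noteq> {0}"
  shows "finite {J. is_ideal K J \<and> I \<subseteq> J}"
proof -
  obtain a where a: "a \<in> I" "a \<noteq> 0" using I idealD(2)[OF I(1)] by blast
  obtain F where F: "finite F" "\<And>x. x \<in> OK K \<Longrightarrow> \<exists>y\<in>F. x - y \<in> pideal a"
    by (rule OK_residues_mod_pideal[OF ideal_OK[OF I(1) a(1)] a(2)]) blast
  let ?S = "{J. is_ideal K J \<and> I \<subseteq> J}"
  have "J \<subseteq> J'" if J: "J \<in> ?S" and J': "J' \<in> ?S" and eq: "J \<inter> F = J' \<inter> F" for J J'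
  proof
    fix x assume x: "x \<in> J"
    obtain y where y: "y \<in> F" "x - y \<in> pideal a" using F(2) ideal_OK J x by blast
    have "pideal a \<subseteq> J" "pideal a \<subseteq> J'" using J J' a(1) pideal_least by blast+
    hence "x - (x - y) \<in> J" using J x y(2) ideal_diff by blast
    hence "y \<in> J'" using eq y(1) by auto
    hence "y + (x - y) \<in> J'" using J' y(2) \<open>pideal a \<subseteq> J'\<close> idealD(3) by blast
    thus "x \<in> J'" by simp
  qed
  hence "inj_on (\<lambda>J. J \<inter> F) ?S" by (intro inj_onI) blast
  moreover have "(\<lambda>J. J \<inter> F) ` ?S \<subseteq> Pow F" by auto
  ultimately show ?thesis using F(1) by (metis finite_Pow_iff finite_imageD finite_subset)
qed

lemma nonzero_ideal_induct [consumes 2, case_names step]: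
  assumes "is_ideal K I" "I \<noteq> {0}"
    and step: "\<And>I. is_ideal K I \<Longrightarrow> I \<noteq> {0} \<Longrightarrow> (\<And>J. is_ideal K J \<Longrightarrow> I \<subset> J \<Longrightarrow> P J) \<Longrightarrow> P I"
  shows "P I"
  using assms(1,2)
proof (induction "card {J. is_ideal K J \<and> I \<subseteq> J}" arbitrary: I rule: less_induct)
  case less
  show ?case
  proof (rule step[OF less.prems])
    fix J assume J: "is_ideal K J" "I \<subset> J"
    have "{L. is_ideal K L \<and> J \<subseteq> L} \<subset> {L. is_ideal K L \<and> I \<subseteq> L}"
      using J less.prems by auto
    hence "card {L. is_ideal K L \<and> J \<subseteq> L} < card {L. is_ideal K L \<and> I \<subseteq> L}"
      by (rule psubset_card_mono[OF finite_ideals_containing[OF less.prems]])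
    thus "P J" using J less.prems idealD(2)[OF less.prems(1)] by (intro less.hyps) auto
  qed
qed

lemma power_diff_in_pideal:
  assumes a: "a \<in> OK K" "a \<noteq> 0" and x: "x \<in> OK K"
  obtains i j where "i < j" "x ^ j - x ^ i \<in> pideal a"
proof -
  obtain F where F: "finite F" "\<And>x. x \<in> OK K \<Longrightarrow> \<exists>y\<in>F. x - y \<in> pideal a"
    by (rule OK_residues_mod_pideal[OF a]) blast
  have "\<forall>k. \<exists>y\<in>F. x ^ k - y \<in> pideal a" using F(2) OK_power[OF x] by blast
  then obtain Y where Y: "\<And>k. Y k \<in> F" "\<And>k. x ^ k - Y k \<in> pideal a" by metis
  have "finite (range Y)" using Y(1) F(1) by (meson finite_subset image_subset_iff)
  hence "\<not> inj Y" using finite_imageD infinite_UNIV_nat by blast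
  then obtain i j where "i < j" "Y i = Y j"
    unfolding inj_def by (metis linorder_neqE_nat)
  moreover have "(x ^ j - Y j) - (x ^ i - Y i) \<in> pideal a"
    using ideal_diff[OF pideal_ideal[OF a(1)] Y(2) Y(2)] .
  ultimately show ?thesis using that by auto
qed

text \<open>O_K / P is a finite domain, so the powers of an element x \<notin> P repeat modulo P, which
  makes x invertible modulo P.\<close>
lemma prime_ideal_maximal:
  assumes P: "prime_ideal P" "P \<noteq> {0}"
  shows "maximal_ideal P"
proof -
  have Pi: "is_ideal K P" "1 \<notin> P"
    and Pp: "\<And>x y. x \<in> OK K \<Longrightarrow> y \<in> OK K \<Longrightarrow> x * y \<in> P \<Longrightarrow> x \<in> P \<or> y \<in> P"
    using P(1) unfolding prime_ideal_def by auto
  obtain a where a: "a \<in> P" "a \<noteq> 0" using P(2) idealD(2)[OF Pi(1)] by blast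
  have a_OK: "a \<in> OK K" using ideal_OK[OF Pi(1) a(1)] .
  have "1 \<in> J" if J: "is_ideal K J" "P \<subseteq> J" "J \<noteq> P" for J
  proof -
    obtain x where x: "x \<in> J" "x \<notin> P" using J by blast
    have x_OK: "x \<in> OK K" using ideal_OK[OF J(1) x(1)] .
    obtain i j where ij: "i < j" "x ^ j - x ^ i \<in> pideal a"
      by (rule power_diff_in_pideal[OF a_OK a(2) x_OK])
    define m where "m = j - Suc i"
    have m: "j = i + Suc m" using ij(1) unfolding m_def by simp
    have "x ^ j - x ^ i = x ^ i * (x ^ Suc m - 1)"
      unfolding m by (simp add: power_add algebra_simps)
    moreover have "x ^ j - x ^ i \<in> P" using ij(2) pideal_least[OF Pi(1) a(1)] by blast
    ultimately have prod: "x ^ i * (x ^ Suc m - 1) \<in> P" by simp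
    have "x ^ k \<notin> P" for k
    proof (induction k)
      case (Suc k)
      thus ?case using Pp[OF x_OK OK_power[OF x_OK], of k] x(2) by auto
    qed (use Pi(2) in simp)
    hence "x ^ Suc m - 1 \<in> P"
      using Pp[OF OK_power[OF x_OK] OK_diff[OF OK_power[OF x_OK] OK_1] prod] by blast
    hence e1: "x ^ Suc m - 1 \<in> J" using J(2) by blast
    have e2: "x ^ Suc m \<in> J"
      using idealD(4)[OF J(1) OK_power[OF x_OK] x(1), of m] by (simp add: mult.commute)
    have "x ^ Suc m - (x ^ Suc m - 1) \<in> J" by (rule ideal_diff[OF J(1) e2 e1])
    thus "1 \<in> J" by simp
  qed
  thus ?thesis unfolding maximal_ideal_def using Pi by blast
qed

lemma maximal_ideal_exists:
  assumes "is_ideal K I" "I \<noteq> {0}" "1 \<notin> I"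
  shows "\<exists>M. maximal_ideal M \<and> I \<subseteq> M"
  using assms
proof (induction rule: nonzero_ideal_induct)
  case (step I)
  show ?case
  proof (cases "maximal_ideal I")
    case False
    then obtain J where "is_ideal K J" "I \<subset> J" "1 \<notin> J"
      using step.prems step.hyps unfolding maximal_ideal_def by blast
    thus ?thesis using step.IH by (meson order.trans psubset_imp_subset)
  qed blast
qed

text \<open>Noetherian induction: a nonzero ideal that is not prime has elements x, y \<notin> L with
  x y \<in> L, and L contains the product of the strictly larger ideals L + \<langle>x\<rangle> and L + \<langle>y\<rangle>.\<close>
lemma products_of_maximal_in:
  assumes "is_ideal K L" "L \<noteq> {0}"
  shows "\<exists>Ps. (\<forall>P\<in>set Ps. maximal_ideal P) \<and> products_in Ps L"
  using assms
proof (induction rule: nonzero_ideal_induct)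
  case (step L)
  consider "1 \<in> L" | "prime_ideal L" | x y where "x \<in> OK K" "y \<in> OK K" "x * y \<in> L" "x \<notin> L" "y \<notin> L"
    using step.hyps unfolding prime_ideal_def by blast
  thus ?case
  proof cases
    case 1
    thus ?thesis using products_in_Nil by (intro exI[of _ "[]"]) simp
  next
    case 2
    hence "maximal_ideal L" using prime_ideal_maximal step.hyps(2) by blast
    thus ?thesis using products_in_single by (intro exI[of _ "[L]"]) auto
  next
    case 3
    have bigger: "is_ideal K (ideal_plus L z) \<and> L \<subset> ideal_plus L z" if "z \<in> OK K" "z \<notin> L" for z
      using ideal_plus_ideal[OF step.hyps(1) that(1)] ideal_plus_superset ideal_plus_mem[OF step.hyps(1)]
        that(2) by blast
    obtain Ps1 where Ps1: "\<forall>P\<in>set Ps1. maximal_ideal P" "products_in Ps1 (ideal_plus L x)"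
      using step.IH bigger[OF 3(1,4)] by blast
    obtain Ps2 where Ps2: "\<forall>P\<in>set Ps2. maximal_ideal P" "products_in Ps2 (ideal_plus L y)"
      using step.IH bigger[OF 3(2,5)] by blast
    have "products_in (Ps1 @ Ps2) L"
      using Ps1(2) Ps2(2) ideal_plus_mult[OF step.hyps(1) 3(1,2) _ _ 3(3)]
      by (rule products_in_append)
    thus ?thesis using Ps1(1) Ps2(1) by (intro exI[of _ "Ps1 @ Ps2"]) auto
  qed
qed

lemma maximal_ideal_in_products:
  assumes M: "maximal_ideal M" "L \<subseteq> M" and Ps: "\<forall>P\<in>set Ps. maximal_ideal P" "products_in Ps L"
  shows "M \<in> set Ps"
proof -
  have "P \<subseteq> OK K" if "P \<in> set Ps" for P
    using Ps(1) that idealD(1) unfolding maximal_ideal_def by blast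
  then obtain P where "P \<in> set Ps" "P \<subseteq> M"
    using prime_ideal_products_in[OF maximal_ideal_prime[OF M(1)]] products_in_mono[OF Ps(2) M(2)]
    by blast
  thus ?thesis using Ps(1) M(1) unfolding maximal_ideal_def by metis
qed

text \<open>Take a shortest list of maximal ideals whose product lies in \<langle>a\<rangle>. One factor is a
  maximal ideal M \<supseteq> L; the product of the others is not contained in \<langle>a\<rangle>, but its
  product with M is.\<close>
lemma exists_mult_into_pideal:
  assumes L: "is_ideal K L" "L \<noteq> {0}" "1 \<notin> L" and a: "a \<in> L" "a \<noteq> 0"
  obtains b where "b \<in> OK K" "b \<notin> pideal a" "\<And>y. y \<in> L \<Longrightarrow> y * b \<in> pideal a"
proof -
  have a_OK: "a \<in> OK K" using ideal_OK[OF L(1) a(1)] .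
  obtain M where M: "maximal_ideal M" "L \<subseteq> M" using maximal_ideal_exists[OF L] by blast
  define Q where "Q Ps \<longleftrightarrow> (\<forall>P\<in>set Ps. maximal_ideal P) \<and> products_in Ps (pideal a)" for Ps
  obtain Ps0 where "Q Ps0"
    using products_of_maximal_in[OF pideal_ideal[OF a_OK]] pideal_mem[of a] a(2) unfolding Q_def by blast
  define Ps where "Ps = (ARG_MIN length Ps. Q Ps)"
  have Ps: "Q Ps" and min: "\<And>Qs. Q Qs \<Longrightarrow> length Ps \<le> length Qs"
    using arg_min_nat_lemma[of Q Ps0 length] \<open>Q Ps0\<close> unfolding Ps_def by auto
  have "M \<in> set Ps"
    using maximal_ideal_in_products[OF M(1)] Ps pideal_least[OF L(1) a(1)] M(2) unfolding Q_def by blast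
  then obtain Ps1 Ps2 where split: "Ps = Ps1 @ M # Ps2" by (meson split_list)
  have "\<not> Q (Ps1 @ Ps2)" using min[of "Ps1 @ Ps2"] split by auto
  then obtain xs1 xs2 where xs: "list_all2 (\<in>) xs1 Ps1" "list_all2 (\<in>) xs2 Ps2"
    and b: "prod_list (xs1 @ xs2) \<notin> pideal a"
    using Ps split unfolding Q_def products_in_def by (auto simp: list_all2_append2)
  have "prod_list (xs1 @ xs2) \<in> OK K"
    using Ps split xs idealD(1) unfolding Q_def maximal_ideal_def
    by (intro prod_list_OK[of _ "Ps1 @ Ps2"]) (auto intro: list_all2_appendI)
  moreover have "y * prod_list (xs1 @ xs2) \<in> pideal a" if y: "y \<in> L" for y
  proof -
    have "list_all2 (\<in>) (xs1 @ y # xs2) Ps"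
      unfolding split using xs y M(2) by (auto intro: list_all2_appendI)
    hence "prod_list (xs1 @ y # xs2) \<in> pideal a" using Ps unfolding Q_def products_in_def by blast
    thus ?thesis by (simp add: mult_ac)
  qed
  ultimately show ?thesis using that b by blast
qed

lemma ideal_inv_not_subset_OK:
  assumes L: "is_ideal K L" "L \<noteq> {0}" "1 \<notin> L"
  shows "\<not> ideal_inv L \<subseteq> OK K"
proof -
  obtain a where a: "a \<in> L" "a \<noteq> 0" using L(2) idealD(2)[OF L(1)] by blast
  obtain b where b: "b \<in> OK K" "b \<notin> pideal a" and yb: "\<And>y. y \<in> L \<Longrightarrow> y * b \<in> pideal a"
    by (rule exists_mult_into_pideal[OF L a]) blast
  have "b / a * y \<in> OK K" if y: "y \<in> L" for y
  proof -
    obtain r where "y * b = r * a" "r \<in> OK K" using yb[OF y] unfolding pideal_def by blast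
    thus ?thesis using a(2) by (simp add: field_simps)
  qed
  hence "b / a \<in> ideal_inv L"
    unfolding ideal_inv_def using b(1) ideal_OK[OF L(1) a(1)] by auto
  moreover have "b / a \<notin> OK K"
    using pideal_memI[of "b / a" a] b(2) a(2) by auto
  ultimately show ?thesis by blast
qed

text \<open>If I I\<inverse> \<noteq> O_K, some z \<in> K - O_K multiplies I I\<inverse> into O_K, hence stabilises the
  nonzero ideal a I\<inverse> for a \<in> I, and is therefore integral.\<close>
lemma one_in_ideal_mult_inv:
  assumes I: "is_ideal K I" "I \<noteq> {0}"
  shows "1 \<in> ideal_mult_inv I"
proof (rule ccontr)
  assume "1 \<notin> ideal_mult_inv I"
  obtain a where a: "a \<in> I" "a \<noteq> 0" using I idealD(2)[OF I(1)] by blast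
  have nonzero: "ideal_mult_inv I \<noteq> {0}"
    using mult_mem_ideal_mult_inv[OF a(1) one_ideal_inv[OF I(1)]] a(2) by auto
  obtain z where z: "z \<in> ideal_inv (ideal_mult_inv I)" "z \<notin> OK K"
    using ideal_inv_not_subset_OK[OF ideal_mult_inv_ideal nonzero \<open>1 \<notin> ideal_mult_inv I\<close>] by blast
  have zv: "z * v \<in> ideal_inv I" if v: "v \<in> ideal_inv I" for v
  proof -
    have "z * (y * v) \<in> OK K" if "y \<in> I" for y
      using z(1) mult_mem_ideal_mult_inv[OF that v] unfolding ideal_inv_def by blast
    moreover have "z \<in> K" "v \<in> K" using z(1) v unfolding ideal_inv_def by auto
    ultimately show ?thesis unfolding ideal_inv_def by (auto simp: mult_ac)
  qed
  define M where "M = (\<lambda>v. a * v) ` ideal_inv I"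
  have "a \<in> M"
    unfolding M_def using one_ideal_inv[OF I(1)] by (intro image_eqI[of _ _ 1]) auto
  hence M: "is_ideal K M" "M \<noteq> {0}"
    unfolding M_def using scaled_ideal_inv_ideal[OF I(1) a(1)] a(2) by auto
  have "z * x \<in> M" if "x \<in> M" for x
  proof -
    obtain v where v: "x = a * v" "v \<in> ideal_inv I" using \<open>x \<in> M\<close> unfolding M_def by blast
    have "z * x = a * (z * v)" unfolding v(1) by (simp add: mult.left_commute)
    thus ?thesis using zv[OF v(2)] unfolding M_def by blast
  qed
  hence "algebraic_int z" by (rule algebraic_int_if_ideal_stable[OF M])
  thus False using z OKI unfolding ideal_inv_def by blast
qed

lemma ideal_inv_inj:
  assumes I: "is_ideal K I" "I \<noteq> {0}" and J: "is_ideal K J" "J \<noteq> {0}"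
    and eq: "ideal_inv I = ideal_inv J"
  shows "I = J"
proof -
  have "J \<subseteq> I" if I: "is_ideal K I" "I \<noteq> {0}" and eq: "ideal_inv I = ideal_inv J" for I J
  proof
    fix x assume x: "x \<in> J"
    have "ideal_mult_inv I \<subseteq> colon_ideal I x"
      unfolding ideal_mult_inv_def
    proof (rule gen_ideal_least[OF colon_ideal_ideal[OF I(1)]], safe)
      fix u v assume uv: "u \<in> I" "v \<in> ideal_inv I"
      have "v * x \<in> OK K" "v * u \<in> OK K" using uv x eq unfolding ideal_inv_def by auto
      moreover have "x * (u * v) \<in> I"
        using idealD(4)[OF I(1) \<open>v * x \<in> OK K\<close> uv(1)] by (simp add: mult_ac)
      ultimately show "u * v \<in> colon_ideal I x"
        unfolding colon_ideal_def by (simp add: mult.commute)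
    qed
    hence "1 \<in> colon_ideal I x" using one_in_ideal_mult_inv[OF I] by blast
    thus "x \<in> I" unfolding colon_ideal_def by simp
  qed
  thus ?thesis using assms by blast
qed

end

section \<open>Equivalent reduced fractions\<close>

context numfield_basis
begin

lemma OK_if_scale_stable:
  assumes I: "is_ideal K I" "I \<noteq> {0}" and c: "c \<in> K" "(\<lambda>x. c * x) ` I \<subseteq> I"
  shows "c \<in> OK K"
  using algebraic_int_if_ideal_stable[OF I] c by (auto intro: OKI)

lemma equivalent_fraction_ideal2:
  assumes a: "a1 \<in> OK K" "a2 \<in> OK K" and b: "b1 \<in> OK K" "b2 \<in> OK K" "b1 \<noteq> 0" "b2 \<noteq> 0"
    and eq: "a2 / b2 = a1 / b1" and neq: "pideal b2 \<noteq> pideal b1"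
  shows "ideal2 a2 b2 \<noteq> ideal2 a1 b1"
    and "frac_div K b1 (ideal2 a1 b1) = frac_div K b2 (ideal2 a2 b2)"
proof -
  define c where "c = b2 / b1"
  have c: "c \<in> K" "c \<noteq> 0" unfolding c_def using b by auto
  have "a2 = c * a1" "b2 = c * b1" using eq b unfolding c_def by (simp_all add: field_simps)
  hence g2: "ideal2 a2 b2 = (\<lambda>x. c * x) ` ideal2 a1 b1" by (simp add: ideal2_scale)
  show "frac_div K b1 (ideal2 a1 b1) = frac_div K b2 (ideal2 a2 b2)"
    unfolding frac_div_ideal_inv g2 ideal_inv_scale[OF c] image_image
    using b(3,4) by (simp add: c_def field_simps)
  show "ideal2 a2 b2 \<noteq> ideal2 a1 b1"
  proof
    assume "ideal2 a2 b2 = ideal2 a1 b1"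
    hence stable: "(\<lambda>x. c * x) ` ideal2 a1 b1 = ideal2 a1 b1" unfolding g2 .
    have g1: "is_ideal K (ideal2 a1 b1)" "ideal2 a1 b1 \<noteq> {0}"
      using ideal2_ideal[OF a(1) b(1)] ideal2_mem(2)[where a = a1 and b = b1] b(3) by auto
    have c_OK: "c \<in> OK K" using OK_if_scale_stable[OF g1 c(1)] stable by blast
    have "(\<lambda>x. inverse c * x) ` ideal2 a1 b1 = (\<lambda>x. inverse c * x) ` (\<lambda>x. c * x) ` ideal2 a1 b1"
      unfolding stable ..
    also have "\<dots> = ideal2 a1 b1" using c(2) by (simp add: image_mult_image_mult)
    finally have "inverse c \<in> OK K" using OK_if_scale_stable[OF g1] c by blast
    hence "b1 \<in> pideal (c * b1)" using pideal_memI[of "inverse c" "c * b1"] c(2)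
      by (simp add: mult.assoc[symmetric])
    hence "pideal b1 \<subseteq> pideal (c * b1)" using pideal_least pideal_ideal b(1) c_OK by blast
    moreover have "pideal (c * b1) \<subseteq> pideal b1"
      using pideal_least[OF pideal_ideal[OF b(1)] pideal_memI[OF c_OK]] .
    ultimately have "pideal (c * b1) = pideal b1" by blast
    thus False using neq b(3) by (simp add: c_def)
  qed
qed

text \<open>This is where invertibility of ideals enters: b1 g1\<inverse> = b2 g2\<inverse> forces
  g2 = (b2 / b1) g1.\<close>
lemma frac_div_eq_imp_ideal2:
  assumes a: "a1 \<in> OK K" and b: "b1 \<in> OK K" "b2 \<in> OK K" "b1 \<noteq> 0" "b2 \<noteq> 0"
    and g2: "inseverable K g2" and eq: "frac_div K b1 (ideal2 a1 b1) = frac_div K b2 g2"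
  shows "b2 * a1 / b1 \<in> OK K" and "g2 = ideal2 (b2 * a1 / b1) b2"
proof -
  define c where "c = b2 / b1"
  have c: "c \<in> K" "c \<noteq> 0" unfolding c_def using b by auto
  have g2_ideal: "is_ideal K g2" "g2 \<noteq> {0}" using g2 unfolding inseverable_def by auto
  have eq': "(\<lambda>x. b2 * x) ` ideal_inv g2 = (\<lambda>x. b1 * x) ` ideal_inv (ideal2 a1 b1)"
    using eq unfolding frac_div_ideal_inv by simp
  have "ideal_inv g2 = (\<lambda>x. inverse b2 * x) ` (\<lambda>x. b2 * x) ` ideal_inv g2"
    using b(4) by (simp add: image_mult_image_mult)
  also have "\<dots> = (\<lambda>x. inverse c * x) ` ideal_inv (ideal2 a1 b1)"
    unfolding eq' image_mult_image_mult c_def by (simp add: field_simps)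
  also have "\<dots> = ideal_inv (ideal2 (c * a1) b2)"
    unfolding ideal_inv_scale[OF c, symmetric] ideal2_scale using b(3) by (simp add: c_def)
  finally have inv_eq: "ideal_inv g2 = ideal_inv (ideal2 (c * a1) b2)" .
  have "1 \<in> ideal_inv (ideal2 (c * a1) b2)"
    unfolding inv_eq[symmetric] by (rule one_ideal_inv[OF g2_ideal(1)])
  hence ca: "c * a1 \<in> OK K" using ideal2_mem(1) unfolding ideal_inv_def by force
  thus "b2 * a1 / b1 \<in> OK K" by (simp add: c_def)
  have "is_ideal K (ideal2 (c * a1) b2)" "ideal2 (c * a1) b2 \<noteq> {0}"
    using ideal2_ideal[OF ca b(2)] ideal2_mem(2)[where a = "c * a1" and b = b2] b(4) by auto
  hence "g2 = ideal2 (c * a1) b2" using ideal_inv_inj[OF g2_ideal] inv_eq by blast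
  thus "g2 = ideal2 (b2 * a1 / b1) b2" by (simp add: c_def)
qed

lemma same_class_ideal2:
  assumes "b \<in> OK K" "b' \<in> OK K" "b \<noteq> 0" "b' \<noteq> 0"
  shows "same_class K (ideal2 a b) (ideal2 (b' * a / b) b')"
proof -
  have "(\<lambda>x. b' * x) ` ideal2 a b = (\<lambda>x. b * x) ` ideal2 (b' * a / b) b'"
    unfolding ideal2_scale using assms(3) by (simp add: mult.commute)
  thus ?thesis unfolding same_class_def using assms by blast
qed

end

theorem proposition3p3:
  fixes K :: "complex set" and a1 b1 b2 :: complex
  assumes "number_field K"
    and "a1 \<in> OK K" and "b1 \<in> OK K"
    and "b1 \<noteq> 0" and "\<not> OK_unit K b1"
    and "reduced_frac K a1 b1"
    and "inseverable K (gen_ideal K {a1, b1})"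
    and "\<not> principal_ideal K (gen_ideal K {a1, b1})"
    and "b2 \<in> OK K" and "b2 \<noteq> 0"
    and "gen_ideal K {b2} \<noteq> gen_ideal K {b1}"
  shows "((\<exists>a2\<in>OK K. a2 / b2 = a1 / b1 \<and> reduced_frac K a2 b2) \<longleftrightarrow>
           (\<exists>g2. inseverable K g2 \<and> g2 \<noteq> gen_ideal K {a1, b1} \<and>
              frac_div K b1 (gen_ideal K {a1, b1}) = frac_div K b2 g2))
       \<and> (\<forall>g2. inseverable K g2 \<and> g2 \<noteq> gen_ideal K {a1, b1} \<and>
              frac_div K b1 (gen_ideal K {a1, b1}) = frac_div K b2 g2
              \<longrightarrow> same_class K (gen_ideal K {a1, b1}) g2)"
proof -
  interpret numfield K by unfold_locales (fact assms(1))
  obtain w where "OK_rational_basis K w" using OK_rational_basis_exists by blast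
  then interpret numfield_basis K w by unfold_locales
  note a1 = assms(2) and b = assms(3,9,4,10)
  have neq: "pideal b2 \<noteq> pideal b1" using assms(11) gen_ideal_singleton b(1,2) by simp
  show ?thesis unfolding gen_ideal_pair[OF a1 b(1)]
  proof (intro conjI iffI allI impI; elim exE bexE conjE)
    fix a2 assume a2: "a2 \<in> OK K" "a2 / b2 = a1 / b1" "reduced_frac K a2 b2"
    thus "\<exists>g2. inseverable K g2 \<and> g2 \<noteq> ideal2 a1 b1 \<and> frac_div K b1 (ideal2 a1 b1) = frac_div K b2 g2"
      using equivalent_fraction_ideal2[OF a1 a2(1) b a2(2) neq] reduced_frac_iff_inseverable b by blast
  next
    fix g2 assume "inseverable K g2" "frac_div K b1 (ideal2 a1 b1) = frac_div K b2 g2"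
    note g2 = frac_div_eq_imp_ideal2[OF a1 b this]
    show "\<exists>a2\<in>OK K. a2 / b2 = a1 / b1 \<and> reduced_frac K a2 b2"
      using g2 reduced_frac_iff_inseverable b \<open>inseverable K g2\<close>
      by (intro bexI[of _ "b2 * a1 / b1"]) auto
  next
    fix g2 assume "inseverable K g2" "frac_div K b1 (ideal2 a1 b1) = frac_div K b2 g2"
    thus "same_class K (ideal2 a1 b1) g2"
      using frac_div_eq_imp_ideal2[OF a1 b] same_class_ideal2[OF b] by metis
  qed
qed

end
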